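(* Let $K$ be an algebraically closed field, $\mathcal{T}$ a $\operatorname{Hom}$-finite Krull–Schmidt triangulated $K$-category, $\mathcal{I}$ an Auslander–Reiten ideal of $\mathcal{T}$, $\mathcal{R}$ an ideal of $\mathcal{T}$, and $X,Y$ indecomposable objects. (1) If $f\in\mathcal{I}^n\mathcal{R}(X,Y)$ for some $n\ge1$, then there exist $s\ge1$, indecomposable objects $E_1,\dots,E_s$ and morphisms $X\xrightarrow{h_i}E_i\xrightarrow{g_i}Y$ with $h_i\in\mathcal{R}(X,E_i)$ and each $g_i$ a sum of composites of $n$ right $\mathcal{I}$-irreducible morphisms between indecomposable objects, such that $f=\sum_{i=1}^sg_ih_i$. (2) If $f\in\mathcal{R}\mathcal{I}^n(X,Y)$ for some $n\ge1$, then there exist $s\ge1$, indecomposable objects $E_1,\dots,E_s$ and morphisms $X\xrightarrow{h_i}E_i\xrightarrow{g_i}Y$ with $g_i\in\mathcal{R}$ and each $h_i$ a sum of composites of $n$ left $\mathcal{I}$-irreducible morphisms between indecomposable objects, such that $f=\sum_{i=1}^sg_ih_i$.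
   Context: Composition of $b$ then $a$ is $ab$. An ideal: subgroups $\mathcal{I}(X,Y)\subseteq\operatorname{Hom}(X,Y)$ closed under composition. For ideals $\mathcal{A},\mathcal{B}$, $\mathcal{A}\mathcal{B}$ is the ideal of finite sums of composites $ab$, $a\in\mathcal{A}$, $b\in\mathcal{B}$; $\mathcal{I}^n$ is the $n$-fold product. A left (resp. right) $\mathcal{I}$-approximation of $T$ is a morphism in $\mathcal{I}$ starting (resp. ending) at $T$ through which every morphism of $\mathcal{I}$ starting (resp. ending) at $T$ factors. $\mathcal{I}$ is an Auslander–Reiten ideal if every object has left and right $\mathcal{I}$-approximations and every object $X$ admits triangles $X\xrightarrow{f}M\xrightarrow{g}Y\to X[1]$ and $Z\xrightarrow{u}N\xrightarrow{v}X\to Z[1]$ with $f,u$ left and $g,v$ right $\mathcal{I}$-approximations. $h$ is left $\mathcal{I}$-irreducible if $h\in\mathcal{I}$ and whenever $h=h_2h_1$ with $h_1\in\mathcal{I}$, $h_2$ is split epic; right $\mathcal{I}$-irreducible if $h\in\mathcal{I}$ and whenever $h=h_2h_1$ with $h_2\in\mathcal{I}$, $h_1$ is split monic. *)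

theory Defs
  imports "HOL-Computational_Algebra.Polynomial"
begin

text \<open>A K-linear category with a shift and a class of distinguished triangles.
  Composition convention: cmp C a b is "b then a", i.e. the composite ab.\<close>

record ('o, 'm, 'k) tcat =
  ob    :: "'o set"
  hom   :: "'o \<Rightarrow> 'o \<Rightarrow> 'm set"
  cmp   :: "'m \<Rightarrow> 'm \<Rightarrow> 'm"
  idm   :: "'o \<Rightarrow> 'm"
  madd  :: "'m \<Rightarrow> 'm \<Rightarrow> 'm"
  mzero :: "'o \<Rightarrow> 'o \<Rightarrow> 'm"
  mneg  :: "'m \<Rightarrow> 'm"
  msmult :: "'k \<Rightarrow> 'm \<Rightarrow> 'm"
  shO   :: "'o \<Rightarrow> 'o"
  shM   :: "'m \<Rightarrow> 'm"
  dtri  :: "('o \<times> 'o \<times> 'o \<times> 'm \<times> 'm \<times> 'm) set"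

definition msum :: "('o, 'm, 'k) tcat \<Rightarrow> 'o \<Rightarrow> 'o \<Rightarrow> 'm list \<Rightarrow> 'm" where
  "msum C X Y fs = foldr (madd C) fs (mzero C X Y)"

definition k_linear_cat :: "('o, 'm, 'k::field) tcat \<Rightarrow> bool" where
  "k_linear_cat C \<longleftrightarrow>
    (\<forall>X\<in>ob C. \<forall>Y\<in>ob C. \<forall>X'\<in>ob C. \<forall>Y'\<in>ob C.
        hom C X Y \<inter> hom C X' Y' \<noteq> {} \<longrightarrow> X = X' \<and> Y = Y') \<and>
    (\<forall>X\<in>ob C. idm C X \<in> hom C X X) \<and>
    (\<forall>X\<in>ob C. \<forall>Y\<in>ob C. \<forall>Z\<in>ob C. \<forall>f\<in>hom C X Y. \<forall>g\<in>hom C Y Z. cmp C g f \<in> hom C X Z) \<and>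
    (\<forall>W\<in>ob C. \<forall>X\<in>ob C. \<forall>Y\<in>ob C. \<forall>Z\<in>ob C. \<forall>f\<in>hom C W X. \<forall>g\<in>hom C X Y. \<forall>h\<in>hom C Y Z.
        cmp C h (cmp C g f) = cmp C (cmp C h g) f) \<and>
    (\<forall>X\<in>ob C. \<forall>Y\<in>ob C. \<forall>f\<in>hom C X Y. cmp C (idm C Y) f = f \<and> cmp C f (idm C X) = f) \<and>
    (\<forall>X\<in>ob C. \<forall>Y\<in>ob C.
        mzero C X Y \<in> hom C X Y \<and>
        (\<forall>f\<in>hom C X Y. \<forall>g\<in>hom C X Y. madd C f g \<in> hom C X Y) \<and>
        (\<forall>f\<in>hom C X Y. mneg C f \<in> hom C X Y) \<and>
        (\<forall>a. \<forall>f\<in>hom C X Y. msmult C a f \<in> hom C X Y) \<and>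
        (\<forall>f\<in>hom C X Y. \<forall>g\<in>hom C X Y. \<forall>h\<in>hom C X Y.
            madd C (madd C f g) h = madd C f (madd C g h)) \<and>
        (\<forall>f\<in>hom C X Y. \<forall>g\<in>hom C X Y. madd C f g = madd C g f) \<and>
        (\<forall>f\<in>hom C X Y. madd C (mzero C X Y) f = f) \<and>
        (\<forall>f\<in>hom C X Y. madd C (mneg C f) f = mzero C X Y) \<and>
        (\<forall>a. \<forall>f\<in>hom C X Y. \<forall>g\<in>hom C X Y.
            msmult C a (madd C f g) = madd C (msmult C a f) (msmult C a g)) \<and>
        (\<forall>a b. \<forall>f\<in>hom C X Y. msmult C (a + b) f = madd C (msmult C a f) (msmult C b f)) \<and>
        (\<forall>a b. \<forall>f\<in>hom C X Y. msmult C (a * b) f = msmult C a (msmult C b f)) \<and>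
        (\<forall>f\<in>hom C X Y. msmult C 1 f = f)) \<and>
    (\<forall>X\<in>ob C. \<forall>Y\<in>ob C. \<forall>Z\<in>ob C. \<forall>f\<in>hom C X Y. \<forall>f'\<in>hom C X Y. \<forall>g\<in>hom C Y Z. \<forall>g'\<in>hom C Y Z.
        cmp C g (madd C f f') = madd C (cmp C g f) (cmp C g f') \<and>
        cmp C (madd C g g') f = madd C (cmp C g f) (cmp C g' f) \<and>
        (\<forall>a. cmp C g (msmult C a f) = msmult C a (cmp C g f) \<and>
             cmp C (msmult C a g) f = msmult C a (cmp C g f)))"

definition is_iso :: "('o, 'm, 'k) tcat \<Rightarrow> 'o \<Rightarrow> 'o \<Rightarrow> 'm \<Rightarrow> bool" where
  "is_iso C X Y f \<longleftrightarrow> f \<in> hom C X Y \<and>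
     (\<exists>g\<in>hom C Y X. cmp C g f = idm C X \<and> cmp C f g = idm C Y)"

definition is_zero_obj :: "('o, 'm, 'k) tcat \<Rightarrow> 'o \<Rightarrow> bool" where
  "is_zero_obj C Z \<longleftrightarrow> Z \<in> ob C \<and> idm C Z = mzero C Z Z"

definition is_biprod :: "('o, 'm, 'k) tcat \<Rightarrow> 'o \<Rightarrow> 'o \<Rightarrow> 'o \<Rightarrow> 'm \<Rightarrow> 'm \<Rightarrow> 'm \<Rightarrow> 'm \<Rightarrow> bool" where
  "is_biprod C A B P i1 i2 p1 p2 \<longleftrightarrow>
     A \<in> ob C \<and> B \<in> ob C \<and> P \<in> ob C \<and>
     i1 \<in> hom C A P \<and> i2 \<in> hom C B P \<and> p1 \<in> hom C P A \<and> p2 \<in> hom C P B \<and>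
     cmp C p1 i1 = idm C A \<and> cmp C p2 i2 = idm C B \<and>
     cmp C p2 i1 = mzero C A B \<and> cmp C p1 i2 = mzero C B A \<and>
     madd C (cmp C i1 p1) (cmp C i2 p2) = idm C P"

definition additive_k_cat :: "('o, 'm, 'k::field) tcat \<Rightarrow> bool" where
  "additive_k_cat C \<longleftrightarrow> k_linear_cat C \<and> (\<exists>Z. is_zero_obj C Z) \<and>
     (\<forall>A\<in>ob C. \<forall>B\<in>ob C. \<exists>P i1 i2 p1 p2. is_biprod C A B P i1 i2 p1 p2)"

definition hom_finite :: "('o, 'm, 'k::field) tcat \<Rightarrow> bool" where
  "hom_finite C \<longleftrightarrow> (\<forall>X\<in>ob C. \<forall>Y\<in>ob C. \<exists>bs. set bs \<subseteq> hom C X Y \<and>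
     (\<forall>f\<in>hom C X Y. \<exists>cs. length cs = length bs \<and>
        f = msum C X Y (map2 (\<lambda>c b. msmult C c b) cs bs)))"

definition indec :: "('o, 'm, 'k) tcat \<Rightarrow> 'o \<Rightarrow> bool" where
  "indec C X \<longleftrightarrow> X \<in> ob C \<and> \<not> is_zero_obj C X \<and>
     (\<forall>A\<in>ob C. \<forall>B\<in>ob C. \<forall>i1 i2 p1 p2. is_biprod C A B X i1 i2 p1 p2 \<longrightarrow>
        is_zero_obj C A \<or> is_zero_obj C B)"

definition local_end :: "('o, 'm, 'k) tcat \<Rightarrow> 'o \<Rightarrow> bool" where
  "local_end C X \<longleftrightarrow> X \<in> ob C \<and> idm C X \<noteq> mzero C X X \<and>
     (\<forall>f\<in>hom C X X. is_iso C X X f \<or> is_iso C X X (madd C (idm C X) (mneg C f)))"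

definition krull_schmidt :: "('o, 'm, 'k) tcat \<Rightarrow> bool" where
  "krull_schmidt C \<longleftrightarrow> (\<forall>X\<in>ob C. \<exists>(n::nat) Xs \<iota> \<pi>.
     (\<forall>i<n. local_end C (Xs i) \<and> \<iota> i \<in> hom C (Xs i) X \<and> \<pi> i \<in> hom C X (Xs i)) \<and>
     (\<forall>i<n. \<forall>j<n. cmp C (\<pi> i) (\<iota> j) = (if i = j then idm C (Xs i) else mzero C (Xs j) (Xs i))) \<and>
     msum C X X (map (\<lambda>i. cmp C (\<iota> i) (\<pi> i)) [0..<n]) = idm C X)"

definition cand_tri :: "('o, 'm, 'k) tcat \<Rightarrow> 'o \<Rightarrow> 'o \<Rightarrow> 'o \<Rightarrow> 'm \<Rightarrow> 'm \<Rightarrow> 'm \<Rightarrow> bool" where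
  "cand_tri C X Y Z u v w \<longleftrightarrow> X \<in> ob C \<and> Y \<in> ob C \<and> Z \<in> ob C \<and>
     u \<in> hom C X Y \<and> v \<in> hom C Y Z \<and> w \<in> hom C Z (shO C X)"

definition triangulated_cat :: "('o, 'm, 'k::field) tcat \<Rightarrow> bool" where
  "triangulated_cat C \<longleftrightarrow> additive_k_cat C \<and>
   \<comment> \<open>the shift is a K-linear auto-equivalence\<close>
   (\<forall>X\<in>ob C. shO C X \<in> ob C) \<and>
   (\<forall>X\<in>ob C. \<forall>Y\<in>ob C. \<forall>f\<in>hom C X Y. shM C f \<in> hom C (shO C X) (shO C Y)) \<and>
   (\<forall>X\<in>ob C. \<forall>Y\<in>ob C. \<forall>Z\<in>ob C. \<forall>f\<in>hom C X Y. \<forall>g\<in>hom C Y Z.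
       shM C (cmp C g f) = cmp C (shM C g) (shM C f)) \<and>
   (\<forall>X\<in>ob C. shM C (idm C X) = idm C (shO C X)) \<and>
   (\<forall>X\<in>ob C. \<forall>Y\<in>ob C. \<forall>f\<in>hom C X Y. \<forall>g\<in>hom C X Y.
       shM C (madd C f g) = madd C (shM C f) (shM C g) \<and>
       (\<forall>a. shM C (msmult C a f) = msmult C a (shM C f))) \<and>
   (\<forall>X\<in>ob C. \<forall>Y\<in>ob C. bij_betw (shM C) (hom C X Y) (hom C (shO C X) (shO C Y))) \<and>
   (\<forall>Y\<in>ob C. \<exists>X\<in>ob C. \<exists>f. is_iso C (shO C X) Y f) \<and>
   \<comment> \<open>distinguished triangles are triangles\<close>
   (\<forall>X Y Z u v w. (X, Y, Z, u, v, w) \<in> dtri C \<longrightarrow> cand_tri C X Y Z u v w) \<and>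
   \<comment> \<open>TR1: closure under isomorphism of triangles\<close>
   (\<forall>X Y Z u v w X' Y' Z' u' v' w' a b c.
      (X, Y, Z, u, v, w) \<in> dtri C \<and> cand_tri C X' Y' Z' u' v' w' \<and>
      is_iso C X X' a \<and> is_iso C Y Y' b \<and> is_iso C Z Z' c \<and>
      cmp C b u = cmp C u' a \<and> cmp C c v = cmp C v' b \<and> cmp C (shM C a) w = cmp C w' c
      \<longrightarrow> (X', Y', Z', u', v', w') \<in> dtri C) \<and>
   \<comment> \<open>TR1: X -id-> X -> 0 -> X[1] is distinguished\<close>
   (\<forall>X\<in>ob C. \<forall>Z0. is_zero_obj C Z0 \<longrightarrow>
      (X, X, Z0, idm C X, mzero C X Z0, mzero C Z0 (shO C X)) \<in> dtri C) \<and>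
   \<comment> \<open>TR1: every morphism is the base of a distinguished triangle\<close>
   (\<forall>X\<in>ob C. \<forall>Y\<in>ob C. \<forall>u\<in>hom C X Y. \<exists>Z v w. (X, Y, Z, u, v, w) \<in> dtri C) \<and>
   \<comment> \<open>TR2: rotation\<close>
   (\<forall>X Y Z u v w. cand_tri C X Y Z u v w \<longrightarrow>
      ((X, Y, Z, u, v, w) \<in> dtri C \<longleftrightarrow> (Y, Z, shO C X, v, w, mneg C (shM C u)) \<in> dtri C)) \<and>
   \<comment> \<open>TR3: morphism completion\<close>
   (\<forall>X Y Z u v w X' Y' Z' u' v' w' a b.
      (X, Y, Z, u, v, w) \<in> dtri C \<and> (X', Y', Z', u', v', w') \<in> dtri C \<and>
      a \<in> hom C X X' \<and> b \<in> hom C Y Y' \<and> cmp C b u = cmp C u' a \<longrightarrow>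
      (\<exists>c\<in>hom C Z Z'. cmp C c v = cmp C v' b \<and> cmp C (shM C a) w = cmp C w' c)) \<and>
   \<comment> \<open>TR4: octahedral axiom\<close>
   (\<forall>X Y Z u v Z' j k X' l i Y' m n.
      (X, Y, Z', u, j, k) \<in> dtri C \<and> (Y, Z, X', v, l, i) \<in> dtri C \<and>
      (X, Z, Y', cmp C v u, m, n) \<in> dtri C \<longrightarrow>
      (\<exists>f g. (Z', Y', X', f, g, cmp C (shM C j) i) \<in> dtri C \<and>
         cmp C f j = cmp C m v \<and> cmp C n f = k \<and> cmp C g m = l \<and>
         cmp C (shM C u) n = cmp C i g))"

definition is_ideal :: "('o, 'm, 'k) tcat \<Rightarrow> ('o \<Rightarrow> 'o \<Rightarrow> 'm set) \<Rightarrow> bool" where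
  "is_ideal C I \<longleftrightarrow>
     (\<forall>X\<in>ob C. \<forall>Y\<in>ob C. I X Y \<subseteq> hom C X Y \<and> mzero C X Y \<in> I X Y \<and>
        (\<forall>f\<in>I X Y. \<forall>g\<in>I X Y. madd C f g \<in> I X Y) \<and> (\<forall>f\<in>I X Y. mneg C f \<in> I X Y)) \<and>
     (\<forall>W\<in>ob C. \<forall>X\<in>ob C. \<forall>Y\<in>ob C. \<forall>Z\<in>ob C. \<forall>f\<in>I X Y. \<forall>a\<in>hom C W X. \<forall>b\<in>hom C Y Z.
        cmp C b (cmp C f a) \<in> I W Z)"

definition ideal_prod :: "('o, 'm, 'k) tcat \<Rightarrow> ('o \<Rightarrow> 'o \<Rightarrow> 'm set) \<Rightarrow> ('o \<Rightarrow> 'o \<Rightarrow> 'm set)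
    \<Rightarrow> 'o \<Rightarrow> 'o \<Rightarrow> 'm set" where
  "ideal_prod C A B X Y = {f. \<exists>ts :: ('o \<times> 'm \<times> 'm) list.
      (\<forall>(W, a, b) \<in> set ts. W \<in> ob C \<and> a \<in> A W Y \<and> b \<in> B X W) \<and>
      f = msum C X Y (map (\<lambda>(W, a, b). cmp C a b) ts)}"

fun ideal_pow :: "('o, 'm, 'k) tcat \<Rightarrow> ('o \<Rightarrow> 'o \<Rightarrow> 'm set) \<Rightarrow> nat \<Rightarrow> ('o \<Rightarrow> 'o \<Rightarrow> 'm set)" where
  "ideal_pow C I 0 = hom C"
| "ideal_pow C I (Suc 0) = I"
| "ideal_pow C I (Suc (Suc n)) = ideal_prod C I (ideal_pow C I (Suc n))"

definition left_approx :: "('o, 'm, 'k) tcat \<Rightarrow> ('o \<Rightarrow> 'o \<Rightarrow> 'm set) \<Rightarrow> 'o \<Rightarrow> 'o \<Rightarrow> 'm \<Rightarrow> bool" where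
  "left_approx C I T M f \<longleftrightarrow> M \<in> ob C \<and> f \<in> I T M \<and>
     (\<forall>N\<in>ob C. \<forall>g\<in>I T N. \<exists>g'\<in>hom C M N. g = cmp C g' f)"

definition right_approx :: "('o, 'm, 'k) tcat \<Rightarrow> ('o \<Rightarrow> 'o \<Rightarrow> 'm set) \<Rightarrow> 'o \<Rightarrow> 'o \<Rightarrow> 'm \<Rightarrow> bool" where
  "right_approx C I T M f \<longleftrightarrow> M \<in> ob C \<and> f \<in> I M T \<and>
     (\<forall>N\<in>ob C. \<forall>g\<in>I N T. \<exists>g'\<in>hom C N M. g = cmp C f g')"

definition ar_ideal :: "('o, 'm, 'k) tcat \<Rightarrow> ('o \<Rightarrow> 'o \<Rightarrow> 'm set) \<Rightarrow> bool" where
  "ar_ideal C I \<longleftrightarrow> is_ideal C I \<and>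
     (\<forall>T\<in>ob C. (\<exists>M f. left_approx C I T M f) \<and> (\<exists>M f. right_approx C I T M f)) \<and>
     (\<forall>X\<in>ob C.
        (\<exists>M Y f g w. (X, M, Y, f, g, w) \<in> dtri C \<and> left_approx C I X M f \<and> right_approx C I Y M g) \<and>
        (\<exists>Z N u v w. (Z, N, X, u, v, w) \<in> dtri C \<and> left_approx C I Z N u \<and> right_approx C I X N v))"

definition left_irr :: "('o, 'm, 'k) tcat \<Rightarrow> ('o \<Rightarrow> 'o \<Rightarrow> 'm set) \<Rightarrow> 'o \<Rightarrow> 'o \<Rightarrow> 'm \<Rightarrow> bool" where
  "left_irr C I A B h \<longleftrightarrow> h \<in> I A B \<and>
     (\<forall>Z\<in>ob C. \<forall>h1\<in>I A Z. \<forall>h2\<in>hom C Z B. h = cmp C h2 h1 \<longrightarrow>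
        (\<exists>s\<in>hom C B Z. cmp C h2 s = idm C B))"

definition right_irr :: "('o, 'm, 'k) tcat \<Rightarrow> ('o \<Rightarrow> 'o \<Rightarrow> 'm set) \<Rightarrow> 'o \<Rightarrow> 'o \<Rightarrow> 'm \<Rightarrow> bool" where
  "right_irr C I A B h \<longleftrightarrow> h \<in> I A B \<and>
     (\<forall>Z\<in>ob C. \<forall>h1\<in>hom C A Z. \<forall>h2\<in>I Z B. h = cmp C h2 h1 \<longrightarrow>
        (\<exists>r\<in>hom C Z A. cmp C r h1 = idm C A))"

inductive irr_chain :: "('o, 'm, 'k) tcat \<Rightarrow> ('o \<Rightarrow> 'o \<Rightarrow> 'm \<Rightarrow> bool) \<Rightarrow> 'o \<Rightarrow> 'o \<Rightarrow> nat \<Rightarrow> 'm \<Rightarrow> bool"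
  for C P where
  one: "indec C X \<Longrightarrow> indec C Y \<Longrightarrow> P X Y f \<Longrightarrow> irr_chain C P X Y (Suc 0) f"
| step: "irr_chain C P X Y n f \<Longrightarrow> indec C Z \<Longrightarrow> P Y Z g \<Longrightarrow> irr_chain C P X Z (Suc n) (cmp C g f)"

definition sum_of_chains :: "('o, 'm, 'k) tcat \<Rightarrow> ('o \<Rightarrow> 'o \<Rightarrow> 'm \<Rightarrow> bool) \<Rightarrow> nat \<Rightarrow> 'o \<Rightarrow> 'o \<Rightarrow> 'm \<Rightarrow> bool" where
  "sum_of_chains C P n X Y g \<longleftrightarrow>
     (\<exists>fs. (\<forall>f\<in>set fs. irr_chain C P X Y n f) \<and> g = msum C X Y fs)"

end

theory Submission
  imports Defs
begin

text \<open>
  Let Y be indecomposable and M \<rightarrow> Y a right I-approximation. Decomposing M into summands with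
  local endomorphism rings (Krull-Schmidt) gives finitely many v_i : N_i \<rightarrow> Y such that every
  morphism in I(-, Y) is a sum of composites v_i c_i. If v_i is not right I-irreducible, say
  v_i = h_2 h_1 with h_2 \<in> I and h_1 not split mono, then expanding h_2 in the generators gives
  v_i = v_i e + q, where e factors through h_1, hence is a non-unit of the local ring End(N_i), and
  q is generated by the other v_j; so v_i = q (1 - e)^-1 is redundant. Discarding redundant
  generators leaves right I-irreducible ones, and induction along I^(n+1) = I I^n factors I^n(-, Y)
  through composites of n right I-irreducible morphisms; composing with R gives (1).
  Statement (2) is (1) in the opposite category, which needs I^n I = I I^n, i.e. associativity of
  the product of ideals.
\<close>

definition msums :: "('o, 'm, 'k) tcat \<Rightarrow> 'o \<Rightarrow> 'o \<Rightarrow> 'm set \<Rightarrow> 'm set" where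
  "msums C X Y P = msum C X Y ` lists P"

definition composites :: "('o, 'm, 'k) tcat \<Rightarrow> ('o \<Rightarrow> 'o \<Rightarrow> 'm set) \<Rightarrow> ('o \<Rightarrow> 'o \<Rightarrow> 'm set)
    \<Rightarrow> 'o \<Rightarrow> 'o \<Rightarrow> 'm set" where
  "composites C A B X Y = {cmp C a b | W a b. W \<in> ob C \<and> a \<in> A W Y \<and> b \<in> B X W}"

lemma msum_Nil [simp]: "msum C X Y [] = mzero C X Y"
  by (simp add: msum_def)

lemma msum_Cons [simp]: "msum C X Y (f # fs) = madd C f (msum C X Y fs)"
  by (simp add: msum_def)

lemma msums_image: "msums C X Y (F ` S) = (\<lambda>ts. msum C X Y (map F ts)) ` lists S"
  by (simp add: msums_def lists_image image_image)

lemma zero_in_msums: "mzero C X Y \<in> msums C X Y P"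
  unfolding msums_def by (auto intro: image_eqI[of _ _ "[]"])

lemma msums_mono: "P \<subseteq> Q \<Longrightarrow> msums C X Y P \<subseteq> msums C X Y Q"
  unfolding msums_def by (intro image_mono lists_mono)

lemma msums_least:
  assumes "mzero C X Y \<in> A" and "\<And>p a. p \<in> P \<Longrightarrow> a \<in> A \<Longrightarrow> madd C p a \<in> A"
  shows "msums C X Y P \<subseteq> A"
proof -
  have "fs \<in> lists P \<Longrightarrow> msum C X Y fs \<in> A" for fs
    using assms by (induction fs) auto
  then show ?thesis
    unfolding msums_def by blast
qed

lemma ideal_prod_msums: "ideal_prod C A B X Y = msums C X Y (composites C A B X Y)"
proof -
  let ?S = "{(W, a, b). W \<in> ob C \<and> a \<in> A W Y \<and> b \<in> B X W}"
  have gens: "composites C A B X Y = (\<lambda>(W, a, b). cmp C a b) ` ?S"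
    unfolding composites_def by force
  have terms: "ts \<in> lists ?S \<longleftrightarrow> (\<forall>(W, a, b) \<in> set ts. W \<in> ob C \<and> a \<in> A W Y \<and> b \<in> B X W)" for ts
    by auto
  show ?thesis
    unfolding gens msums_image unfolding ideal_prod_def image_def terms by blast
qed

lemma ideal_prod_cong:
  assumes "\<And>W. W \<in> ob C \<Longrightarrow> A W Y = A' W Y" and "\<And>W. W \<in> ob C \<Longrightarrow> B X W = B' X W"
  shows "ideal_prod C A B X Y = ideal_prod C A' B' X Y"
proof -
  have "composites C A B X Y = composites C A' B' X Y"
    unfolding composites_def using assms by blast
  then show ?thesis
    by (simp add: ideal_prod_msums)
qed

lemma ideal_subset_hom: "is_ideal C I \<Longrightarrow> X \<in> ob C \<Longrightarrow> Y \<in> ob C \<Longrightarrow> I X Y \<subseteq> hom C X Y"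
  unfolding is_ideal_def by blast

definition hom_subfamily :: "('o, 'm, 'k) tcat \<Rightarrow> ('o \<Rightarrow> 'o \<Rightarrow> 'm set) \<Rightarrow> bool" where
  "hom_subfamily C A \<longleftrightarrow> (\<forall>X\<in>ob C. \<forall>Y\<in>ob C. A X Y \<subseteq> hom C X Y)"

lemma is_ideal_hom_subfamily: "is_ideal C I \<Longrightarrow> hom_subfamily C I"
  unfolding is_ideal_def hom_subfamily_def by blast

locale k_linear =
  fixes C :: "('o, 'm, 'k::field) tcat"
  assumes k_linear: "k_linear_cat C"
begin

lemma hom_idm: "X \<in> ob C \<Longrightarrow> idm C X \<in> hom C X X"
  using k_linear unfolding k_linear_cat_def by (elim conjE) meson

lemma hom_cmp:
  "X \<in> ob C \<Longrightarrow> Y \<in> ob C \<Longrightarrow> Z \<in> ob C \<Longrightarrow> f \<in> hom C X Y \<Longrightarrow> g \<in> hom C Y Z \<Longrightarrow> cmp C g f \<in> hom C X Z"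
  using k_linear unfolding k_linear_cat_def by (elim conjE) meson

lemma cmp_assoc:
  "W \<in> ob C \<Longrightarrow> X \<in> ob C \<Longrightarrow> Y \<in> ob C \<Longrightarrow> Z \<in> ob C \<Longrightarrow>
   f \<in> hom C W X \<Longrightarrow> g \<in> hom C X Y \<Longrightarrow> h \<in> hom C Y Z \<Longrightarrow>
   cmp C (cmp C h g) f = cmp C h (cmp C g f)"
  using k_linear unfolding k_linear_cat_def by auto

lemma cmp_idm_left: "X \<in> ob C \<Longrightarrow> Y \<in> ob C \<Longrightarrow> f \<in> hom C X Y \<Longrightarrow> cmp C (idm C Y) f = f"
  using k_linear unfolding k_linear_cat_def by (elim conjE) meson

lemma cmp_idm_right: "X \<in> ob C \<Longrightarrow> Y \<in> ob C \<Longrightarrow> f \<in> hom C X Y \<Longrightarrow> cmp C f (idm C X) = f"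
  using k_linear unfolding k_linear_cat_def by (elim conjE) meson

lemma hom_mzero: "X \<in> ob C \<Longrightarrow> Y \<in> ob C \<Longrightarrow> mzero C X Y \<in> hom C X Y"
  using k_linear unfolding k_linear_cat_def by (elim conjE) meson

lemma hom_madd:
  "X \<in> ob C \<Longrightarrow> Y \<in> ob C \<Longrightarrow> f \<in> hom C X Y \<Longrightarrow> g \<in> hom C X Y \<Longrightarrow> madd C f g \<in> hom C X Y"
  using k_linear unfolding k_linear_cat_def by (elim conjE) meson

lemma hom_mneg: "X \<in> ob C \<Longrightarrow> Y \<in> ob C \<Longrightarrow> f \<in> hom C X Y \<Longrightarrow> mneg C f \<in> hom C X Y"
  using k_linear unfolding k_linear_cat_def by (elim conjE) meson

lemma madd_assoc:
  "X \<in> ob C \<Longrightarrow> Y \<in> ob C \<Longrightarrow> f \<in> hom C X Y \<Longrightarrow> g \<in> hom C X Y \<Longrightarrow> h \<in> hom C X Y \<Longrightarrow>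
   madd C (madd C f g) h = madd C f (madd C g h)"
  using k_linear unfolding k_linear_cat_def by (elim conjE) meson

lemma madd_comm:
  "X \<in> ob C \<Longrightarrow> Y \<in> ob C \<Longrightarrow> f \<in> hom C X Y \<Longrightarrow> g \<in> hom C X Y \<Longrightarrow> madd C f g = madd C g f"
  using k_linear unfolding k_linear_cat_def by (elim conjE) meson

lemma madd_zero_left: "X \<in> ob C \<Longrightarrow> Y \<in> ob C \<Longrightarrow> f \<in> hom C X Y \<Longrightarrow> madd C (mzero C X Y) f = f"
  using k_linear unfolding k_linear_cat_def by (elim conjE) meson

lemma madd_neg_left: "X \<in> ob C \<Longrightarrow> Y \<in> ob C \<Longrightarrow> f \<in> hom C X Y \<Longrightarrow> madd C (mneg C f) f = mzero C X Y"
  using k_linear unfolding k_linear_cat_def by (elim conjE) meson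

lemma cmp_madd_distrib_left:
  "X \<in> ob C \<Longrightarrow> Y \<in> ob C \<Longrightarrow> Z \<in> ob C \<Longrightarrow> f \<in> hom C X Y \<Longrightarrow> f' \<in> hom C X Y \<Longrightarrow> g \<in> hom C Y Z \<Longrightarrow>
   cmp C g (madd C f f') = madd C (cmp C g f) (cmp C g f')"
  using k_linear unfolding k_linear_cat_def by (elim conjE) meson

lemma cmp_madd_distrib_right:
  "X \<in> ob C \<Longrightarrow> Y \<in> ob C \<Longrightarrow> Z \<in> ob C \<Longrightarrow> f \<in> hom C X Y \<Longrightarrow> g \<in> hom C Y Z \<Longrightarrow> g' \<in> hom C Y Z \<Longrightarrow>
   cmp C (madd C g g') f = madd C (cmp C g f) (cmp C g' f)"
  using k_linear unfolding k_linear_cat_def by (elim conjE) meson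

lemma madd_zero_right: "X \<in> ob C \<Longrightarrow> Y \<in> ob C \<Longrightarrow> f \<in> hom C X Y \<Longrightarrow> madd C f (mzero C X Y) = f"
  by (metis hom_mzero madd_comm madd_zero_left)

lemma madd_neg_right: "X \<in> ob C \<Longrightarrow> Y \<in> ob C \<Longrightarrow> f \<in> hom C X Y \<Longrightarrow> madd C f (mneg C f) = mzero C X Y"
  by (metis hom_mneg madd_comm madd_neg_left)

lemma madd_idem_eq_zero:
  assumes X: "X \<in> ob C" and Y: "Y \<in> ob C" and z: "z \<in> hom C X Y" and idem: "madd C z z = z"
  shows "z = mzero C X Y"
proof -
  have "z = madd C z (madd C z (mneg C z))"
    using X Y z by (simp add: madd_neg_right madd_zero_right)
  also have "\<dots> = madd C (madd C z z) (mneg C z)"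
    using X Y z by (simp add: hom_mneg madd_assoc)
  also have "\<dots> = mzero C X Y"
    using X Y z idem by (simp add: madd_neg_right)
  finally show ?thesis .
qed

lemma cmp_zero_left:
  "X \<in> ob C \<Longrightarrow> Y \<in> ob C \<Longrightarrow> Z \<in> ob C \<Longrightarrow> f \<in> hom C X Y \<Longrightarrow> cmp C (mzero C Y Z) f = mzero C X Z"
  by (rule madd_idem_eq_zero)
     (auto simp: hom_cmp hom_mzero madd_zero_left simp flip: cmp_madd_distrib_right)

lemma cmp_zero_right:
  "X \<in> ob C \<Longrightarrow> Y \<in> ob C \<Longrightarrow> Z \<in> ob C \<Longrightarrow> g \<in> hom C Y Z \<Longrightarrow> cmp C g (mzero C X Y) = mzero C X Z"
  by (rule madd_idem_eq_zero)
     (auto simp: hom_cmp hom_mzero madd_zero_left simp flip: cmp_madd_distrib_left)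

lemma madd_left_commute:
  "X \<in> ob C \<Longrightarrow> Y \<in> ob C \<Longrightarrow> f \<in> hom C X Y \<Longrightarrow> g \<in> hom C X Y \<Longrightarrow> h \<in> hom C X Y \<Longrightarrow>
   madd C f (madd C g h) = madd C g (madd C f h)"
  by (simp flip: madd_assoc add: madd_comm[of X Y f g])

lemma hom_msum: "X \<in> ob C \<Longrightarrow> Y \<in> ob C \<Longrightarrow> set fs \<subseteq> hom C X Y \<Longrightarrow> msum C X Y fs \<in> hom C X Y"
  by (induction fs) (auto intro: hom_mzero hom_madd)

lemma msum_append:
  "X \<in> ob C \<Longrightarrow> Y \<in> ob C \<Longrightarrow> set fs \<subseteq> hom C X Y \<Longrightarrow> set gs \<subseteq> hom C X Y \<Longrightarrow>
   msum C X Y (fs @ gs) = madd C (msum C X Y fs) (msum C X Y gs)"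
  by (induction fs) (auto simp: madd_zero_left hom_msum madd_assoc)

context
  fixes X Y :: 'o
  assumes X: "X \<in> ob C" and Y: "Y \<in> ob C"
begin

lemma msums_subset_hom: "P \<subseteq> hom C X Y \<Longrightarrow> msums C X Y P \<subseteq> hom C X Y"
  by (rule msums_least) (use X Y in \<open>auto intro: hom_mzero hom_madd\<close>)

lemma madd_in_msums:
  assumes P: "P \<subseteq> hom C X Y" and "f \<in> msums C X Y P" and "g \<in> msums C X Y P"
  shows "madd C f g \<in> msums C X Y P"
proof -
  obtain fs gs where fs: "fs \<in> lists P" "f = msum C X Y fs" and gs: "gs \<in> lists P" "g = msum C X Y gs"
    using assms(2,3) unfolding msums_def by blast
  have "set fs \<subseteq> hom C X Y" "set gs \<subseteq> hom C X Y"
    using fs(1) gs(1) P by auto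
  then have "madd C f g = msum C X Y (fs @ gs)"
    using fs(2) gs(2) X Y by (simp add: msum_append)
  moreover have "fs @ gs \<in> lists P"
    using fs(1) gs(1) by simp
  ultimately show ?thesis
    unfolding msums_def by blast
qed

lemma subset_msums: "P \<subseteq> hom C X Y \<Longrightarrow> P \<subseteq> msums C X Y P"
  unfolding msums_def using X Y by (force simp: madd_zero_right intro: image_eqI[of _ _ "[p]" for p])

lemma msums_msums_subset: "Q \<subseteq> hom C X Y \<Longrightarrow> P \<subseteq> msums C X Y Q \<Longrightarrow> msums C X Y P \<subseteq> msums C X Y Q"
  by (rule msums_least) (auto intro: zero_in_msums madd_in_msums)

lemma msums_Un_split:
  assumes A: "A \<subseteq> hom C X Y" and B: "B \<subseteq> hom C X Y" and f: "f \<in> msums C X Y (A \<union> B)"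
  obtains a b where "a \<in> msums C X Y A" and "b \<in> msums C X Y B" and "f = madd C a b"
proof -
  let ?S = "{madd C a b | a b. a \<in> msums C X Y A \<and> b \<in> msums C X Y B}"
  have "msums C X Y (A \<union> B) \<subseteq> ?S"
  proof (rule msums_least)
    show "mzero C X Y \<in> ?S"
      using X Y by (force simp: madd_zero_left hom_mzero intro: zero_in_msums)
  next
    fix p s assume p: "p \<in> A \<union> B" and "s \<in> ?S"
    then obtain a b where a: "a \<in> msums C X Y A" and b: "b \<in> msums C X Y B" and s: "s = madd C a b"
      by blast
    have homs: "p \<in> hom C X Y" "a \<in> hom C X Y" "b \<in> hom C X Y"
      using p a b A B msums_subset_hom by blast+
    show "madd C p s \<in> ?S"
    proof (cases "p \<in> A")
      case True
      then have "madd C p s = madd C (madd C p a) b" and "madd C p a \<in> msums C X Y A"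
        using homs s a A X Y subset_msums by (auto simp: madd_assoc intro: madd_in_msums)
      with b show ?thesis by blast
    next
      case False
      then have "madd C p s = madd C a (madd C p b)" and "madd C p b \<in> msums C X Y B"
        using homs s b p B X Y subset_msums by (auto simp: madd_left_commute intro: madd_in_msums)
      with a show ?thesis by blast
    qed
  qed
  with f that show ?thesis by blast
qed

end

lemma additive_image_msums:
  assumes X: "X \<in> ob C" and Y: "Y \<in> ob C" and X': "X' \<in> ob C" and Y': "Y' \<in> ob C"
    and P: "P \<subseteq> hom C X Y" and Q: "Q \<subseteq> hom C X' Y'"
    and zero: "\<phi> (mzero C X Y) = mzero C X' Y'"
    and add: "\<And>a b. a \<in> hom C X Y \<Longrightarrow> b \<in> hom C X Y \<Longrightarrow> \<phi> (madd C a b) = madd C (\<phi> a) (\<phi> b)"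
    and gen: "\<And>p. p \<in> P \<Longrightarrow> \<phi> p \<in> msums C X' Y' Q"
    and f: "f \<in> msums C X Y P"
  shows "\<phi> f \<in> msums C X' Y' Q"
proof -
  have "msums C X Y P \<subseteq> {f \<in> hom C X Y. \<phi> f \<in> msums C X' Y' Q}"
  proof (rule msums_least)
    show "mzero C X Y \<in> {f \<in> hom C X Y. \<phi> f \<in> msums C X' Y' Q}"
      using X Y zero by (simp add: hom_mzero zero_in_msums)
  next
    fix p a assume p: "p \<in> P" and a: "a \<in> {f \<in> hom C X Y. \<phi> f \<in> msums C X' Y' Q}"
    have p_hom: "p \<in> hom C X Y"
      using p P by blast
    have "\<phi> (madd C p a) = madd C (\<phi> p) (\<phi> a)"
      using add p_hom a by blast
    moreover have "madd C (\<phi> p) (\<phi> a) \<in> msums C X' Y' Q"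
      using madd_in_msums[OF X' Y' Q gen[OF p]] a by blast
    moreover have "madd C p a \<in> hom C X Y"
      using hom_madd[OF X Y p_hom] a by blast
    ultimately show "madd C p a \<in> {f \<in> hom C X Y. \<phi> f \<in> msums C X' Y' Q}"
      by simp
  qed
  with f show ?thesis by blast
qed

lemma cmp_left_msums:
  assumes X: "X \<in> ob C" and Y: "Y \<in> ob C" and Z: "Z \<in> ob C" and g: "g \<in> hom C Y Z"
    and P: "P \<subseteq> hom C X Y" and Q: "Q \<subseteq> hom C X Z"
    and gen: "\<And>p. p \<in> P \<Longrightarrow> cmp C g p \<in> msums C X Z Q" and f: "f \<in> msums C X Y P"
  shows "cmp C g f \<in> msums C X Z Q"
  by (rule additive_image_msums[where \<phi> = "cmp C g", OF X Y X Z P Q _ _ gen f])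
     (use X Y Z g in \<open>simp_all add: cmp_zero_right cmp_madd_distrib_left\<close>)

lemma cmp_right_msums:
  assumes W: "W \<in> ob C" and X: "X \<in> ob C" and Y: "Y \<in> ob C" and h: "h \<in> hom C W X"
    and P: "P \<subseteq> hom C X Y" and Q: "Q \<subseteq> hom C W Y"
    and gen: "\<And>p. p \<in> P \<Longrightarrow> cmp C p h \<in> msums C W Y Q" and f: "f \<in> msums C X Y P"
  shows "cmp C f h \<in> msums C W Y Q"
  by (rule additive_image_msums[where \<phi> = "\<lambda>f. cmp C f h", OF X Y W Y P Q _ _ gen f])
     (use W X Y h in \<open>simp_all add: cmp_zero_left cmp_madd_distrib_right\<close>)

section \<open>Products and powers of ideals\<close>

lemma ideal_cmp_left:
  assumes I: "is_ideal C I" and X: "X \<in> ob C" and Y: "Y \<in> ob C" and Z: "Z \<in> ob C"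
    and f: "f \<in> I X Y" and g: "g \<in> hom C Y Z"
  shows "cmp C g f \<in> I X Z"
proof -
  have "cmp C g (cmp C f (idm C X)) \<in> I X Z"
    using I X Y Z f g hom_idm unfolding is_ideal_def by blast
  moreover have "f \<in> hom C X Y"
    using I X Y f unfolding is_ideal_def by blast
  ultimately show ?thesis
    using X Y by (simp add: cmp_idm_right)
qed

lemma ideal_cmp_right:
  assumes I: "is_ideal C I" and W: "W \<in> ob C" and X: "X \<in> ob C" and Y: "Y \<in> ob C"
    and f: "f \<in> I X Y" and h: "h \<in> hom C W X"
  shows "cmp C f h \<in> I W Y"
proof -
  have "cmp C (idm C Y) (cmp C f h) \<in> I W Y"
    using I W X Y f h hom_idm unfolding is_ideal_def by blast
  moreover have "f \<in> hom C X Y"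
    using I X Y f unfolding is_ideal_def by blast
  ultimately show ?thesis
    using W X Y h by (simp add: cmp_idm_left hom_cmp)
qed

lemma composites_subset_hom:
  assumes A: "hom_subfamily C A" and B: "hom_subfamily C B" and X: "X \<in> ob C" and Y: "Y \<in> ob C"
  shows "composites C A B X Y \<subseteq> hom C X Y"
proof
  fix f assume "f \<in> composites C A B X Y"
  then obtain W a b where W: "W \<in> ob C" and "a \<in> A W Y" "b \<in> B X W" and f: "f = cmp C a b"
    unfolding composites_def by blast
  with A B X Y have "a \<in> hom C W Y" "b \<in> hom C X W"
    unfolding hom_subfamily_def by blast+
  then show "f \<in> hom C X Y"
    unfolding f by (rule hom_cmp[OF X W Y, rotated])
qed

lemma ideal_prod_hom_subfamily:
  assumes A: "hom_subfamily C A" and B: "hom_subfamily C B"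
  shows "hom_subfamily C (ideal_prod C A B)"
  unfolding hom_subfamily_def
proof (intro ballI)
  fix X Y assume X: "X \<in> ob C" and Y: "Y \<in> ob C"
  show "ideal_prod C A B X Y \<subseteq> hom C X Y"
    unfolding ideal_prod_msums by (rule msums_subset_hom[OF X Y composites_subset_hom[OF A B X Y]])
qed

lemma cmp_in_ideal_prod:
  assumes A: "hom_subfamily C A" and B: "hom_subfamily C B" and X: "X \<in> ob C" and Y: "Y \<in> ob C"
    and "W \<in> ob C" and "a \<in> A W Y" and "b \<in> B X W"
  shows "cmp C a b \<in> ideal_prod C A B X Y"
proof -
  have "cmp C a b \<in> composites C A B X Y"
    unfolding composites_def using assms by blast
  then show ?thesis
    unfolding ideal_prod_msums using subset_msums[OF X Y composites_subset_hom[OF A B X Y]] by blast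
qed

lemma composites_hom_subfamily:
  "hom_subfamily C A \<Longrightarrow> hom_subfamily C B \<Longrightarrow> hom_subfamily C (composites C A B)"
  using composites_subset_hom unfolding hom_subfamily_def[of C "composites C A B"] by blast

lemma composites_assoc:
  assumes A: "hom_subfamily C A" and B: "hom_subfamily C B" and D: "hom_subfamily C D"
    and X: "X \<in> ob C" and Y: "Y \<in> ob C"
  shows "composites C A (composites C B D) X Y = composites C (composites C A B) D X Y"
proof -
  have assoc: "cmp C a (cmp C b d) = cmp C (cmp C a b) d"
    if "V \<in> ob C" "W \<in> ob C" "a \<in> A W Y" "b \<in> B V W" "d \<in> D X V" for V W a b d
    using that A B D X Y unfolding hom_subfamily_def by (simp add: cmp_assoc subset_iff)
  show ?thesis
    unfolding composites_def
  proof (intro equalityI subsetI)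
    fix f assume "f \<in> {cmp C a e |W a e. W \<in> ob C \<and> a \<in> A W Y \<and>
        e \<in> {cmp C b d |V b d. V \<in> ob C \<and> b \<in> B V W \<and> d \<in> D X V}}"
    then obtain V W a b d where "V \<in> ob C" "W \<in> ob C" "a \<in> A W Y" "b \<in> B V W" "d \<in> D X V"
      and "f = cmp C a (cmp C b d)"
      by blast
    with assoc show "f \<in> {cmp C e d |V e d. V \<in> ob C \<and>
        e \<in> {cmp C a b |W a b. W \<in> ob C \<and> a \<in> A W Y \<and> b \<in> B V W} \<and> d \<in> D X V}"
      by blast
  next
    fix f assume "f \<in> {cmp C e d |V e d. V \<in> ob C \<and>
        e \<in> {cmp C a b |W a b. W \<in> ob C \<and> a \<in> A W Y \<and> b \<in> B V W} \<and> d \<in> D X V}"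
    then obtain V W a b d where "V \<in> ob C" "W \<in> ob C" "a \<in> A W Y" "b \<in> B V W" "d \<in> D X V"
      and "f = cmp C (cmp C a b) d"
      by blast
    moreover from this have "f = cmp C a (cmp C b d)"
      using assoc by simp
    ultimately show "f \<in> {cmp C a e |W a e. W \<in> ob C \<and> a \<in> A W Y \<and>
        e \<in> {cmp C b d |V b d. V \<in> ob C \<and> b \<in> B V W \<and> d \<in> D X V}}"
      by blast
  qed
qed

lemma msums_composites_msums_right:
  assumes A: "hom_subfamily C A" and G: "hom_subfamily C G"
    and B: "\<And>U V. U \<in> ob C \<Longrightarrow> V \<in> ob C \<Longrightarrow> B U V = msums C U V (G U V)"
    and X: "X \<in> ob C" and Y: "Y \<in> ob C"
  shows "msums C X Y (composites C A B X Y) = msums C X Y (composites C A G X Y)"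
proof (rule equalityI)
  have AG: "composites C A G X Y \<subseteq> hom C X Y"
    by (rule composites_subset_hom[OF A G X Y])
  have "cmp C a e \<in> msums C X Y (composites C A G X Y)"
    if W: "W \<in> ob C" and a: "a \<in> A W Y" and e: "e \<in> msums C X W (G X W)" for W a e
  proof -
    have "a \<in> hom C W Y" and "G X W \<subseteq> hom C X W"
      using A G X Y W a unfolding hom_subfamily_def by blast+
    moreover have "cmp C a p \<in> msums C X Y (composites C A G X Y)" if "p \<in> G X W" for p
      using that W a subset_msums[OF X Y AG] unfolding composites_def by blast
    ultimately show ?thesis
      using cmp_left_msums[OF X W Y _ _ AG _ e] by blast
  qed
  then have "composites C A B X Y \<subseteq> msums C X Y (composites C A G X Y)"
    using B[OF X] unfolding composites_def by auto
  then show "msums C X Y (composites C A B X Y) \<subseteq> msums C X Y (composites C A G X Y)"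
    by (rule msums_msums_subset[OF X Y AG])
  have "composites C A G X Y \<subseteq> composites C A B X Y"
  proof
    fix f assume "f \<in> composites C A G X Y"
    then obtain W a p where W: "W \<in> ob C" and "a \<in> A W Y" and p: "p \<in> G X W" and "f = cmp C a p"
      unfolding composites_def by blast
    moreover have "p \<in> B X W"
      using B[OF X W] subset_msums[OF X W] G X W p unfolding hom_subfamily_def by blast
    ultimately show "f \<in> composites C A B X Y"
      unfolding composites_def by blast
  qed
  then show "msums C X Y (composites C A G X Y) \<subseteq> msums C X Y (composites C A B X Y)"
    by (rule msums_mono)
qed

lemma msums_composites_msums_left:
  assumes G: "hom_subfamily C G" and D: "hom_subfamily C D"
    and A: "\<And>U V. U \<in> ob C \<Longrightarrow> V \<in> ob C \<Longrightarrow> A U V = msums C U V (G U V)"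
    and X: "X \<in> ob C" and Y: "Y \<in> ob C"
  shows "msums C X Y (composites C A D X Y) = msums C X Y (composites C G D X Y)"
proof (rule equalityI)
  have GD: "composites C G D X Y \<subseteq> hom C X Y"
    by (rule composites_subset_hom[OF G D X Y])
  have "cmp C e d \<in> msums C X Y (composites C G D X Y)"
    if V: "V \<in> ob C" and e: "e \<in> msums C V Y (G V Y)" and d: "d \<in> D X V" for V e d
  proof -
    have "d \<in> hom C X V" and "G V Y \<subseteq> hom C V Y"
      using G D X Y V d unfolding hom_subfamily_def by blast+
    moreover have "cmp C p d \<in> msums C X Y (composites C G D X Y)" if "p \<in> G V Y" for p
      using that V d subset_msums[OF X Y GD] unfolding composites_def by blast
    ultimately show ?thesis
      using cmp_right_msums[OF X V Y _ _ GD _ e] by blast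
  qed
  then have "composites C A D X Y \<subseteq> msums C X Y (composites C G D X Y)"
    using A[OF _ Y] unfolding composites_def by auto
  then show "msums C X Y (composites C A D X Y) \<subseteq> msums C X Y (composites C G D X Y)"
    by (rule msums_msums_subset[OF X Y GD])
  have "composites C G D X Y \<subseteq> composites C A D X Y"
  proof
    fix f assume "f \<in> composites C G D X Y"
    then obtain V p d where V: "V \<in> ob C" and p: "p \<in> G V Y" and "d \<in> D X V" and "f = cmp C p d"
      unfolding composites_def by blast
    moreover have "p \<in> A V Y"
      using A[OF V Y] subset_msums[OF V Y] G V Y p unfolding hom_subfamily_def by blast
    ultimately show "f \<in> composites C A D X Y"
      unfolding composites_def by blast
  qed
  then show "msums C X Y (composites C G D X Y) \<subseteq> msums C X Y (composites C A D X Y)"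
    by (rule msums_mono)
qed

lemma ideal_prod_assoc:
  assumes A: "hom_subfamily C A" and B: "hom_subfamily C B" and D: "hom_subfamily C D"
    and X: "X \<in> ob C" and Y: "Y \<in> ob C"
  shows "ideal_prod C A (ideal_prod C B D) X Y = ideal_prod C (ideal_prod C A B) D X Y"
proof -
  have "ideal_prod C A (ideal_prod C B D) X Y = msums C X Y (composites C A (composites C B D) X Y)"
    unfolding ideal_prod_msums[of C A]
    by (rule msums_composites_msums_right[OF A composites_hom_subfamily[OF B D] ideal_prod_msums X Y])
  also have "\<dots> = msums C X Y (composites C (composites C A B) D X Y)"
    by (simp add: composites_assoc[OF A B D X Y])
  also have "\<dots> = ideal_prod C (ideal_prod C A B) D X Y"
    unfolding ideal_prod_msums[of C _ D]
    by (rule msums_composites_msums_left[OF composites_hom_subfamily[OF A B] D ideal_prod_msums X Y, symmetric])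
  finally show ?thesis .
qed

lemma ideal_pow_hom_subfamily: "is_ideal C I \<Longrightarrow> hom_subfamily C (ideal_pow C I (Suc n))"
  by (induction n) (simp_all add: is_ideal_hom_subfamily ideal_prod_hom_subfamily)

lemma ideal_prod_cmp_left:
  assumes A: "is_ideal C A" and B: "hom_subfamily C B"
    and X: "X \<in> ob C" and V: "V \<in> ob C" and N: "N \<in> ob C"
    and f: "f \<in> ideal_prod C A B X V" and c: "c \<in> hom C V N"
  shows "cmp C c f \<in> ideal_prod C A B X N"
proof -
  have A_hom: "hom_subfamily C A"
    by (rule is_ideal_hom_subfamily[OF A])
  have "cmp C c p \<in> ideal_prod C A B X N" if "p \<in> composites C A B X V" for p
  proof -
    from that obtain W a b where W: "W \<in> ob C" and a: "a \<in> A W V" and b: "b \<in> B X W"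
      and p: "p = cmp C a b"
      unfolding composites_def by blast
    have "a \<in> hom C W V" "b \<in> hom C X W"
      using A_hom B X V W a b unfolding hom_subfamily_def by blast+
    then have "cmp C c p = cmp C (cmp C c a) b"
      unfolding p using X V N W c by (simp add: cmp_assoc)
    moreover have "cmp C c a \<in> A W N"
      by (rule ideal_cmp_left[OF A W V N a c])
    ultimately show ?thesis
      using cmp_in_ideal_prod[OF A_hom B X N W _ b] by simp
  qed
  then show ?thesis
    using f unfolding ideal_prod_msums[of C A B X]
    by (rule cmp_left_msums[OF X V N c composites_subset_hom[OF A_hom B X V] composites_subset_hom[OF A_hom B X N]])
qed

lemma ideal_pow_cmp_left:
  assumes I: "is_ideal C I" and X: "X \<in> ob C" and V: "V \<in> ob C" and N: "N \<in> ob C"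
    and f: "f \<in> ideal_pow C I (Suc n) X V" and c: "c \<in> hom C V N"
  shows "cmp C c f \<in> ideal_pow C I (Suc n) X N"
proof (cases n)
  case 0
  then show ?thesis
    using ideal_cmp_left[OF I X V N _ c] f by simp
next
  case (Suc k)
  then show ?thesis
    using ideal_prod_cmp_left[OF I ideal_pow_hom_subfamily[OF I] X V N _ c] f by simp
qed

lemma ideal_pow_Suc_right:
  assumes I: "is_ideal C I"
  shows "X \<in> ob C \<Longrightarrow> Y \<in> ob C \<Longrightarrow>
    ideal_pow C I (Suc (Suc n)) X Y = ideal_prod C (ideal_pow C I (Suc n)) I X Y"
proof (induction n arbitrary: X Y)
  case 0
  then show ?case by simp
next
  case (Suc n)
  have "ideal_pow C I (Suc (Suc (Suc n))) X Y = ideal_prod C I (ideal_pow C I (Suc (Suc n))) X Y"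
    by simp
  also have "\<dots> = ideal_prod C I (ideal_prod C (ideal_pow C I (Suc n)) I) X Y"
    using Suc by (intro ideal_prod_cong) simp_all
  also have "\<dots> = ideal_prod C (ideal_prod C I (ideal_pow C I (Suc n))) I X Y"
    using Suc.prems I
    by (intro ideal_prod_assoc is_ideal_hom_subfamily ideal_pow_hom_subfamily)
  also have "\<dots> = ideal_prod C (ideal_pow C I (Suc (Suc n))) I X Y"
    by simp
  finally show ?case .
qed

end

section \<open>Right irreducible generators of an ideal\<close>

definition arrows_into :: "('o, 'm, 'k) tcat \<Rightarrow> 'o \<Rightarrow> ('o \<times> 'm) set" where
  "arrows_into C Y = {(N, v). N \<in> ob C \<and> v \<in> hom C N Y}"

definition right_multiples :: "('o, 'm, 'k) tcat \<Rightarrow> ('o \<times> 'm) set \<Rightarrow> 'o \<Rightarrow> 'm set" where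
  "right_multiples C S W = {cmp C v c | N v c. (N, v) \<in> S \<and> c \<in> hom C W N}"

definition generates_right :: "('o, 'm, 'k) tcat \<Rightarrow> ('o \<Rightarrow> 'o \<Rightarrow> 'm set) \<Rightarrow> ('o \<times> 'm) set \<Rightarrow> 'o \<Rightarrow> bool" where
  "generates_right C I S Y \<longleftrightarrow> (\<forall>W\<in>ob C. I W Y \<subseteq> msums C W Y (right_multiples C S W))"

definition local_generators :: "('o, 'm, 'k) tcat \<Rightarrow> ('o \<Rightarrow> 'o \<Rightarrow> 'm set) \<Rightarrow> 'o \<Rightarrow> ('o \<times> 'm) set" where
  "local_generators C I Y = {(N, v). local_end C N \<and> v \<in> I N Y}"

definition local_right_irr :: "('o, 'm, 'k) tcat \<Rightarrow> ('o \<Rightarrow> 'o \<Rightarrow> 'm set) \<Rightarrow> 'o \<Rightarrow> ('o \<times> 'm) set" where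
  "local_right_irr C I Y = {(N, v). local_end C N \<and> right_irr C I N Y v}"

lemma right_multiples_mono: "S \<subseteq> S' \<Longrightarrow> right_multiples C S W \<subseteq> right_multiples C S' W"
  unfolding right_multiples_def by blast

lemma generates_right_mono:
  assumes "S \<subseteq> S'" and gen: "generates_right C I S Y"
  shows "generates_right C I S' Y"
  unfolding generates_right_def
proof
  fix W assume "W \<in> ob C"
  then have "I W Y \<subseteq> msums C W Y (right_multiples C S W)"
    using gen unfolding generates_right_def by blast
  also have "\<dots> \<subseteq> msums C W Y (right_multiples C S' W)"
    using assms(1) by (intro msums_mono right_multiples_mono)
  finally show "I W Y \<subseteq> msums C W Y (right_multiples C S' W)" .
qed

context k_linear
begin

lemma right_multiples_subset_hom:
  assumes S: "S \<subseteq> arrows_into C Y" and W: "W \<in> ob C" and Y: "Y \<in> ob C"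
  shows "right_multiples C S W \<subseteq> hom C W Y"
proof
  fix f assume "f \<in> right_multiples C S W"
  then obtain N v c where "(N, v) \<in> S" and c: "c \<in> hom C W N" and f: "f = cmp C v c"
    unfolding right_multiples_def by blast
  with S have "N \<in> ob C" "v \<in> hom C N Y"
    unfolding arrows_into_def by blast+
  with W Y c show "f \<in> hom C W Y"
    unfolding f by (blast intro: hom_cmp)
qed

lemma msums_right_multiples_cmp:
  assumes S: "S \<subseteq> arrows_into C Y"
    and W': "W' \<in> ob C" and W: "W \<in> ob C" and Y: "Y \<in> ob C"
    and u: "u \<in> msums C W Y (right_multiples C S W)" and d: "d \<in> hom C W' W"
  shows "cmp C u d \<in> msums C W' Y (right_multiples C S W')"
proof (rule cmp_right_msums[OF W' W Y d right_multiples_subset_hom[OF S W Y] right_multiples_subset_hom[OF S W' Y] _ u])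
  fix p assume "p \<in> right_multiples C S W"
  then obtain N v c where Nv: "(N, v) \<in> S" and c: "c \<in> hom C W N" and p: "p = cmp C v c"
    unfolding right_multiples_def by blast
  with S have N: "N \<in> ob C" and v: "v \<in> hom C N Y"
    unfolding arrows_into_def by blast+
  have "cmp C p d = cmp C v (cmp C c d)"
    unfolding p using W' W N Y d c v by (rule cmp_assoc)
  moreover have "cmp C c d \<in> hom C W' N"
    using W' W N d c by (rule hom_cmp)
  ultimately have "cmp C p d \<in> right_multiples C S W'"
    unfolding right_multiples_def using Nv by blast
  then show "cmp C p d \<in> msums C W' Y (right_multiples C S W')"
    using subset_msums[OF W' Y right_multiples_subset_hom[OF S W' Y]] by blast
qed

lemma msums_right_multiples_singleton:
  assumes N: "N \<in> ob C" and Z: "Z \<in> ob C" and Y: "Y \<in> ob C" and v: "v \<in> hom C N Y"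
  shows "msums C Z Y (right_multiples C {(N, v)} Z) \<subseteq> cmp C v ` hom C Z N"
proof (rule msums_least)
  show "mzero C Z Y \<in> cmp C v ` hom C Z N"
    using cmp_zero_right[OF Z N Y v] hom_mzero[OF Z N] by force
next
  fix p a assume "p \<in> right_multiples C {(N, v)} Z" and "a \<in> cmp C v ` hom C Z N"
  then obtain c k where c: "c \<in> hom C Z N" and k: "k \<in> hom C Z N" and "p = cmp C v c" "a = cmp C v k"
    unfolding right_multiples_def by blast
  then have "madd C p a = cmp C v (madd C c k)"
    using Z N Y v by (simp add: cmp_madd_distrib_left)
  then show "madd C p a \<in> cmp C v ` hom C Z N"
    using hom_madd[OF Z N c k] by blast
qed

text \<open>In the local ring End(N) the non-unit e makes 1 - e invertible, and v (1 - e) = q.\<close>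
lemma local_end_nonunit_factor:
  assumes N: "local_end C N" and Y: "Y \<in> ob C"
    and v: "v \<in> hom C N Y" and e: "e \<in> hom C N N" and q: "q \<in> hom C N Y"
    and nonunit: "\<not> (\<exists>e'\<in>hom C N N. cmp C e' e = idm C N)"
    and v_eq: "v = madd C (cmp C v e) q"
  obtains d where "d \<in> hom C N N" and "v = cmp C q d"
proof -
  have N_ob: "N \<in> ob C"
    using N unfolding local_end_def by blast
  let ?u = "madd C (idm C N) (mneg C e)"
  have "\<not> is_iso C N N e"
    using nonunit unfolding is_iso_def by blast
  then have "is_iso C N N ?u"
    using N e unfolding local_end_def by blast
  then obtain d where d: "d \<in> hom C N N" and ud: "cmp C ?u d = idm C N"
    unfolding is_iso_def by blast
  have ve: "cmp C v e \<in> hom C N Y" and vne: "cmp C v (mneg C e) \<in> hom C N Y"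
    using N_ob Y v e by (simp_all add: hom_cmp hom_mneg)
  have "cmp C v ?u = madd C v (cmp C v (mneg C e))"
    using N_ob Y v e by (simp add: cmp_madd_distrib_left hom_idm hom_mneg cmp_idm_right)
  also have "\<dots> = madd C (madd C (cmp C v e) q) (cmp C v (mneg C e))"
    using v_eq by (rule arg_cong[where f = "\<lambda>x. madd C x (cmp C v (mneg C e))"])
  also have "\<dots> = madd C q (madd C (cmp C v e) (cmp C v (mneg C e)))"
    using N_ob Y q ve vne by (simp add: madd_comm[OF N_ob Y ve q] madd_assoc)
  also have "madd C (cmp C v e) (cmp C v (mneg C e)) = cmp C v (madd C e (mneg C e))"
    using N_ob Y v e by (simp add: cmp_madd_distrib_left hom_mneg)
  also have "\<dots> = mzero C N Y"
    using N_ob Y v e by (simp add: madd_neg_right cmp_zero_right)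
  finally have vu: "cmp C v ?u = q"
    using N_ob Y q by (simp add: madd_zero_right)
  have "v = cmp C v (cmp C ?u d)"
    using N_ob Y v ud by (simp add: cmp_idm_right)
  also have "\<dots> = cmp C q d"
    using N_ob Y v d e vu by (simp add: cmp_assoc hom_madd hom_idm hom_mneg flip: vu)
  finally show ?thesis
    using d that by blast
qed

lemma msums_right_multiples_split:
  assumes S: "S \<subseteq> arrows_into C Y" and Nv: "(N, v) \<in> S" and Z: "Z \<in> ob C" and Y: "Y \<in> ob C"
    and h: "h \<in> msums C Z Y (right_multiples C S Z)"
  obtains k r where "k \<in> hom C Z N" and "r \<in> msums C Z Y (right_multiples C (S - {(N, v)}) Z)"
    and "h = madd C (cmp C v k) r"
proof -
  have single: "{(N, v)} \<subseteq> arrows_into C Y" and S': "S - {(N, v)} \<subseteq> arrows_into C Y"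
    using S Nv by blast+
  have N: "N \<in> ob C" and v: "v \<in> hom C N Y"
    using single unfolding arrows_into_def by blast+
  have "right_multiples C S Z = right_multiples C {(N, v)} Z \<union> right_multiples C (S - {(N, v)}) Z"
    using Nv unfolding right_multiples_def by blast
  with h obtain a r where a: "a \<in> msums C Z Y (right_multiples C {(N, v)} Z)"
    and "r \<in> msums C Z Y (right_multiples C (S - {(N, v)}) Z)" and "h = madd C a r"
    using msums_Un_split[OF Z Y right_multiples_subset_hom[OF single Z Y] right_multiples_subset_hom[OF S' Z Y]]
    by metis
  moreover obtain k where "k \<in> hom C Z N" and "a = cmp C v k"
    using msums_right_multiples_singleton[OF N Z Y v] a by blast
  ultimately show ?thesis
    using that by blast
qed

lemma nonirreducible_generator_redundant:
  assumes I: "is_ideal C I" and Y: "Y \<in> ob C" and S: "S \<subseteq> arrows_into C Y"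
    and Nv: "(N, v) \<in> S" and N: "local_end C N" and vI: "v \<in> I N Y"
    and gen: "generates_right C I S Y" and not_irr: "\<not> right_irr C I N Y v"
  shows "v \<in> msums C N Y (right_multiples C (S - {(N, v)}) N)"
proof -
  let ?S' = "S - {(N, v)}"
  have S': "?S' \<subseteq> arrows_into C Y"
    using S by blast
  have N_ob: "N \<in> ob C" and v: "v \<in> hom C N Y"
    using S Nv unfolding arrows_into_def by blast+
  obtain Z h1 h2 where Z: "Z \<in> ob C" and h1: "h1 \<in> hom C N Z" and h2: "h2 \<in> I Z Y"
    and v_eq: "v = cmp C h2 h1" and not_split: "\<not> (\<exists>r\<in>hom C Z N. cmp C r h1 = idm C N)"
    using not_irr vI unfolding right_irr_def by blast
  have "h2 \<in> msums C Z Y (right_multiples C S Z)"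
    using gen Z h2 unfolding generates_right_def by blast
  then obtain k r where k: "k \<in> hom C Z N" and r: "r \<in> msums C Z Y (right_multiples C ?S' Z)"
    and h2_eq: "h2 = madd C (cmp C v k) r"
    by (rule msums_right_multiples_split[OF S Nv Z Y])
  have r_hom: "r \<in> hom C Z Y"
    using msums_subset_hom[OF Z Y right_multiples_subset_hom[OF S' Z Y]] r by blast
  have "v = madd C (cmp C (cmp C v k) h1) (cmp C r h1)"
    using v_eq h2_eq N_ob Z Y h1 k v r_hom by (simp add: cmp_madd_distrib_right hom_cmp)
  also have "cmp C (cmp C v k) h1 = cmp C v (cmp C k h1)"
    by (rule cmp_assoc[OF N_ob Z N_ob Y h1 k v])
  finally have "v = madd C (cmp C v (cmp C k h1)) (cmp C r h1)" .
  moreover have "\<not> (\<exists>e'\<in>hom C N N. cmp C e' (cmp C k h1) = idm C N)"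
  proof
    assume "\<exists>e'\<in>hom C N N. cmp C e' (cmp C k h1) = idm C N"
    then obtain e' where "e' \<in> hom C N N" and "cmp C e' (cmp C k h1) = idm C N"
      by blast
    then have "cmp C e' k \<in> hom C Z N" and "cmp C (cmp C e' k) h1 = idm C N"
      using N_ob Z k h1 by (simp_all add: hom_cmp cmp_assoc)
    with not_split show False
      by blast
  qed
  ultimately obtain d where d: "d \<in> hom C N N" and "v = cmp C (cmp C r h1) d"
    using local_end_nonunit_factor[OF N Y v hom_cmp[OF N_ob Z N_ob h1 k] hom_cmp[OF N_ob Z Y h1 r_hom]]
    by blast
  moreover have "cmp C r h1 \<in> msums C N Y (right_multiples C ?S' N)"
    by (rule msums_right_multiples_cmp[OF S' N_ob Z Y r h1])
  ultimately show ?thesis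
    using msums_right_multiples_cmp[OF S' N_ob N_ob Y _ d] by simp
qed

lemma generates_right_remove:
  assumes S: "S \<subseteq> arrows_into C Y" and Y: "Y \<in> ob C"
    and gen: "generates_right C I S Y"
    and redundant: "v \<in> msums C N Y (right_multiples C (S - {(N, v)}) N)"
  shows "generates_right C I (S - {(N, v)}) Y"
  unfolding generates_right_def
proof
  fix W assume W: "W \<in> ob C"
  let ?S' = "S - {(N, v)}"
  have S': "?S' \<subseteq> arrows_into C Y"
    using S by blast
  have "right_multiples C S W \<subseteq> msums C W Y (right_multiples C ?S' W)"
  proof
    fix p assume "p \<in> right_multiples C S W"
    then obtain N' v' c where N'v': "(N', v') \<in> S" and c: "c \<in> hom C W N'" and p: "p = cmp C v' c"
      unfolding right_multiples_def by blast
    show "p \<in> msums C W Y (right_multiples C ?S' W)"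
    proof (cases "(N', v') = (N, v)")
      case True
      then have N: "N \<in> ob C" and c: "c \<in> hom C W N" and p: "p = cmp C v c"
        using S N'v' c p unfolding arrows_into_def by auto
      show ?thesis
        unfolding p by (rule msums_right_multiples_cmp[OF S' W N Y redundant c])
    next
      case False
      then have "p \<in> right_multiples C ?S' W"
        using N'v' c p unfolding right_multiples_def by blast
      then show ?thesis
        using subset_msums[OF W Y right_multiples_subset_hom[OF S' W Y]] by blast
    qed
  qed
  then show "I W Y \<subseteq> msums C W Y (right_multiples C ?S' W)"
    using gen W msums_msums_subset[OF W Y right_multiples_subset_hom[OF S' W Y]]
    unfolding generates_right_def by blast
qed

lemma local_generators_subset_arrows_into:
  assumes I: "is_ideal C I" and Y: "Y \<in> ob C"
  shows "local_generators C I Y \<subseteq> arrows_into C Y"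
  unfolding local_generators_def arrows_into_def
proof (intro subsetI, clarify)
  fix N v assume "local_end C N" and v: "v \<in> I N Y"
  then have "N \<in> ob C"
    unfolding local_end_def by blast
  with v show "N \<in> ob C \<and> v \<in> hom C N Y"
    using ideal_subset_hom[OF I _ Y] by blast
qed

lemma generates_right_irreducibles_of_finite:
  assumes I: "is_ideal C I" and Y: "Y \<in> ob C" and fin: "finite S"
    and S: "S \<subseteq> local_generators C I Y" and gen: "generates_right C I S Y"
  shows "generates_right C I (local_right_irr C I Y) Y"
  using fin S gen
proof (induction S rule: finite_psubset_induct)
  case (psubset S)
  show ?case
  proof (cases "\<forall>(N, v)\<in>S. right_irr C I N Y v")
    case True
    then have "S \<subseteq> local_right_irr C I Y"
      using psubset.prems(1) unfolding local_generators_def local_right_irr_def by blast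
    then show ?thesis
      by (rule generates_right_mono[OF _ psubset.prems(2)])
  next
    case False
    then obtain N v where Nv: "(N, v) \<in> S" and not_irr: "\<not> right_irr C I N Y v"
      by blast
    have S_hom: "S \<subseteq> arrows_into C Y"
      using psubset.prems(1) local_generators_subset_arrows_into[OF I Y] by blast
    have "local_end C N" "v \<in> I N Y"
      using psubset.prems(1) Nv unfolding local_generators_def by blast+
    then have "v \<in> msums C N Y (right_multiples C (S - {(N, v)}) N)"
      using nonirreducible_generator_redundant[OF I Y S_hom Nv _ _ psubset.prems(2) not_irr] by blast
    then have "generates_right C I (S - {(N, v)}) Y"
      by (rule generates_right_remove[OF S_hom Y psubset.prems(2)])
    moreover have "S - {(N, v)} \<subset> S"
      using Nv by blast
    moreover have "S - {(N, v)} \<subseteq> local_generators C I Y"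
      using psubset.prems(1) by blast
    ultimately show ?thesis
      using psubset.IH by blast
  qed
qed

text \<open>v g = v (\<Sum> \<iota>_i \<pi>_i) g = \<Sum> (v \<iota>_i) (\<pi>_i g).\<close>
lemma cmp_in_msums_right_multiples_of_decomposition:
  assumes M: "M \<in> ob C" and Y: "Y \<in> ob C" and W: "W \<in> ob C"
    and v: "v \<in> hom C M Y" and g: "g \<in> hom C W M"
    and summands: "\<And>i. i < n \<Longrightarrow> Xs i \<in> ob C \<and> \<iota> i \<in> hom C (Xs i) M \<and> \<pi> i \<in> hom C M (Xs i)"
    and idm_M: "msum C M M (map (\<lambda>i. cmp C (\<iota> i) (\<pi> i)) [0..<n]) = idm C M"
  shows "cmp C v g \<in> msums C W Y (right_multiples C ((\<lambda>i. (Xs i, cmp C v (\<iota> i))) ` {..<n}) W)"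
proof -
  let ?S = "(\<lambda>i. (Xs i, cmp C v (\<iota> i))) ` {..<n}"
  let ?P = "{cmp C (\<iota> i) (\<pi> i) | i. i < n}"
  let ?\<phi> = "\<lambda>f. cmp C v (cmp C f g)"
  have S_hom: "right_multiples C ?S W \<subseteq> hom C W Y"
    by (rule right_multiples_subset_hom[OF _ W Y]) (auto simp: arrows_into_def hom_cmp[OF _ M Y _ v] summands)
  have P: "?P \<subseteq> hom C M M"
    using summands hom_cmp[OF M _ M] by blast
  have "map (\<lambda>i. cmp C (\<iota> i) (\<pi> i)) [0..<n] \<in> lists ?P"
    by fastforce
  then have "idm C M \<in> msums C M M ?P"
    unfolding msums_def idm_M[symmetric] by (rule imageI)
  then have "?\<phi> (idm C M) \<in> msums C W Y (right_multiples C ?S W)"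
  proof (rule additive_image_msums[OF M M W Y P S_hom, rotated 3])
    show "?\<phi> (mzero C M M) = mzero C W Y"
      using M W Y g v by (simp add: cmp_zero_left cmp_zero_right)
  next
    fix a b assume "a \<in> hom C M M" "b \<in> hom C M M"
    then show "?\<phi> (madd C a b) = madd C (?\<phi> a) (?\<phi> b)"
      using M W Y g v by (simp add: cmp_madd_distrib_right cmp_madd_distrib_left hom_cmp)
  next
    fix p assume "p \<in> ?P"
    then obtain i where i: "i < n" and p: "p = cmp C (\<iota> i) (\<pi> i)"
      by blast
    have X_i: "Xs i \<in> ob C" and \<iota>: "\<iota> i \<in> hom C (Xs i) M" and \<pi>: "\<pi> i \<in> hom C M (Xs i)"
      using summands[OF i] by blast+
    have "?\<phi> p = cmp C (cmp C v (\<iota> i)) (cmp C (\<pi> i) g)"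
      unfolding p using X_i \<iota> \<pi> M W Y g v by (simp add: cmp_assoc hom_cmp)
    moreover have "cmp C (\<pi> i) g \<in> hom C W (Xs i)"
      by (rule hom_cmp[OF W M X_i g \<pi>])
    ultimately have "?\<phi> p \<in> right_multiples C ?S W"
      unfolding right_multiples_def using i by blast
    then show "?\<phi> p \<in> msums C W Y (right_multiples C ?S W)"
      using subset_msums[OF W Y S_hom] by blast
  qed
  then show ?thesis
    using M W g by (simp add: cmp_idm_left)
qed

lemma right_approx_generates:
  assumes I: "is_ideal C I" and ks: "krull_schmidt C" and Y: "Y \<in> ob C"
    and approx: "right_approx C I Y M v"
  obtains S where "finite S" and "S \<subseteq> local_generators C I Y" and "generates_right C I S Y"
proof -
  have M: "M \<in> ob C" and vI: "v \<in> I M Y" and factor: "\<forall>W\<in>ob C. \<forall>g\<in>I W Y. \<exists>g'\<in>hom C W M. g = cmp C v g'"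
    using approx unfolding right_approx_def by blast+
  have v: "v \<in> hom C M Y"
    using vI ideal_subset_hom[OF I M Y] by blast
  obtain n Xs \<iota> \<pi> where summands: "\<forall>i<(n::nat). local_end C (Xs i) \<and> \<iota> i \<in> hom C (Xs i) M \<and> \<pi> i \<in> hom C M (Xs i)"
    and idm_M: "msum C M M (map (\<lambda>i. cmp C (\<iota> i) (\<pi> i)) [0..<n]) = idm C M"
    using ks M unfolding krull_schmidt_def by blast
  have summands': "Xs i \<in> ob C \<and> \<iota> i \<in> hom C (Xs i) M \<and> \<pi> i \<in> hom C M (Xs i)" if "i < n" for i
    using summands that unfolding local_end_def by blast
  define S where "S = (\<lambda>i. (Xs i, cmp C v (\<iota> i))) ` {..<n}"
  have "S \<subseteq> local_generators C I Y"
    unfolding S_def local_generators_def using summands summands' ideal_cmp_right[OF I _ M Y vI] by blast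
  moreover have "generates_right C I S Y"
    unfolding generates_right_def
  proof (intro ballI subsetI)
    fix W g assume W: "W \<in> ob C" and "g \<in> I W Y"
    then obtain g' where g': "g' \<in> hom C W M" and g: "g = cmp C v g'"
      using factor by blast
    show "g \<in> msums C W Y (right_multiples C S W)"
      unfolding g S_def by (rule cmp_in_msums_right_multiples_of_decomposition[OF M Y W v g' summands' idm_M])
  qed
  moreover have "finite S"
    unfolding S_def by simp
  ultimately show ?thesis
    using that by blast
qed

lemma right_irreducibles_generate:
  assumes "is_ideal C I" and "krull_schmidt C" and "Y \<in> ob C" and "right_approx C I Y M v"
  shows "generates_right C I (local_right_irr C I Y) Y"
proof -
  obtain S where "finite S" and "S \<subseteq> local_generators C I Y" and "generates_right C I S Y"
    by (rule right_approx_generates[OF assms])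
  then show ?thesis
    by (rule generates_right_irreducibles_of_finite[OF assms(1,3)])
qed

end

section \<open>Chains of right irreducible morphisms\<close>

lemma indec_ob: "indec C X \<Longrightarrow> X \<in> ob C"
  unfolding indec_def by blast

lemma irr_chain_indec: "irr_chain C P X Y n f \<Longrightarrow> indec C X \<and> indec C Y"
  by (induction rule: irr_chain.induct) auto

definition irr_chains_into :: "('o, 'm, 'k) tcat \<Rightarrow> ('o \<Rightarrow> 'o \<Rightarrow> 'm \<Rightarrow> bool) \<Rightarrow> nat \<Rightarrow> 'o \<Rightarrow> ('o \<times> 'm) set" where
  "irr_chains_into C P n Y = {(E, g). irr_chain C P E Y n g}"

lemma sum_of_chains_zero: "sum_of_chains C P n X Y (mzero C X Y)"
  unfolding sum_of_chains_def by (auto intro: exI[of _ "[]"])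

context k_linear
begin

lemma biprod_summand_zero:
  assumes A: "A \<in> ob C" and B: "B \<in> ob C" and X: "X \<in> ob C"
    and i: "i \<in> hom C A X" and p: "p \<in> hom C X A" and j: "j \<in> hom C B X" and q: "q \<in> hom C X B"
    and qi: "cmp C q i = mzero C A B" and qj: "cmp C q j = idm C B"
    and iso: "is_iso C X X (cmp C i p)"
  shows "is_zero_obj C B"
proof -
  obtain e' where e': "e' \<in> hom C X X" and inv: "cmp C (cmp C i p) e' = idm C X"
    using iso unfolding is_iso_def by blast
  have "q = cmp C q (cmp C (cmp C i p) e')"
    using X B q inv by (simp add: cmp_idm_right)
  also have "\<dots> = cmp C (cmp C (cmp C q i) p) e'"
    using A B X i p q e' by (simp add: cmp_assoc hom_cmp)
  also have "\<dots> = mzero C X B"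
    using A B X p e' qi by (simp add: cmp_zero_left hom_cmp)
  finally have "idm C B = cmp C (mzero C X B) j"
    using qj by simp
  then show ?thesis
    unfolding is_zero_obj_def using B X j by (simp add: cmp_zero_left)
qed

lemma local_end_indec:
  assumes local: "local_end C X"
  shows "indec C X"
proof -
  have X: "X \<in> ob C"
    using local unfolding local_end_def by blast
  have "is_zero_obj C A \<or> is_zero_obj C B"
    if A: "A \<in> ob C" and B: "B \<in> ob C" and bp: "is_biprod C A B X i1 i2 p1 p2" for A B i1 i2 p1 p2
  proof -
    have h: "i1 \<in> hom C A X" "i2 \<in> hom C B X" "p1 \<in> hom C X A" "p2 \<in> hom C X B"
      "cmp C p1 i1 = idm C A" "cmp C p2 i2 = idm C B" "cmp C p2 i1 = mzero C A B" "cmp C p1 i2 = mzero C B A"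
      and sum: "madd C (cmp C i1 p1) (cmp C i2 p2) = idm C X"
      using bp unfolding is_biprod_def by blast+
    have e1: "cmp C i1 p1 \<in> hom C X X" and e2: "cmp C i2 p2 \<in> hom C X X"
      using A B X h by (simp_all add: hom_cmp)
    have "madd C (idm C X) (mneg C (cmp C i1 p1)) = cmp C i2 p2"
      unfolding sum[symmetric] using X e1 e2
      by (simp add: madd_comm[OF X X e1 e2] madd_assoc hom_mneg madd_neg_right madd_zero_right)
    moreover have "is_iso C X X (cmp C i1 p1) \<or> is_iso C X X (madd C (idm C X) (mneg C (cmp C i1 p1)))"
      using local e1 unfolding local_end_def by blast
    ultimately have "is_iso C X X (cmp C i1 p1) \<or> is_iso C X X (cmp C i2 p2)"
      by simp
    then show ?thesis
      using biprod_summand_zero[OF A B X h(1,3,2,4,7,6)] biprod_summand_zero[OF B A X h(2,4,1,3,8,5)]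
      by blast
  qed
  moreover have "\<not> is_zero_obj C X"
    using local unfolding local_end_def is_zero_obj_def by blast
  ultimately show ?thesis
    unfolding indec_def using X by blast
qed

lemma right_irr_hom:
  assumes "is_ideal C I" and "A \<in> ob C" and "B \<in> ob C" and "right_irr C I A B h"
  shows "h \<in> hom C A B"
proof -
  have "h \<in> I A B"
    using assms(4) unfolding right_irr_def by (rule conjunct1)
  then show ?thesis
    using ideal_subset_hom[OF assms(1-3)] by blast
qed

lemma irr_chain_hom:
  assumes P_hom: "\<And>A B h. indec C A \<Longrightarrow> indec C B \<Longrightarrow> P A B h \<Longrightarrow> h \<in> hom C A B"
  shows "irr_chain C P X Y n f \<Longrightarrow> f \<in> hom C X Y"
proof (induction rule: irr_chain.induct)
  case (one X Y f)
  then show ?case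
    by (rule P_hom)
next
  case (step X Y n f Z g)
  have X: "X \<in> ob C" and Y: "Y \<in> ob C"
    using irr_chain_indec[OF step.hyps(1)] by (simp_all add: indec_ob)
  have Z: "Z \<in> ob C"
    using step.hyps(2) by (rule indec_ob)
  have "indec C Y"
    using irr_chain_indec[OF step.hyps(1)] by simp
  then show ?case
    by (rule hom_cmp[OF X Y Z step.IH P_hom[OF _ step.hyps(2,3)]])
qed

lemma right_irr_chain_hom:
  assumes I: "is_ideal C I" and chain: "irr_chain C (right_irr C I) X Y n f"
  shows "f \<in> hom C X Y"
  by (rule irr_chain_hom[OF _ chain]) (rule right_irr_hom[OF I indec_ob indec_ob])

lemma right_irr_chains_into_subset:
  assumes I: "is_ideal C I"
  shows "irr_chains_into C (right_irr C I) n Y \<subseteq> arrows_into C Y"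
  unfolding arrows_into_def irr_chains_into_def
proof (intro subsetI, clarify)
  fix E g assume chain: "irr_chain C (right_irr C I) E Y n g"
  then show "E \<in> ob C \<and> g \<in> hom C E Y"
    using irr_chain_indec[OF chain] right_irr_chain_hom[OF I chain] by (simp add: indec_ob)
qed

lemma cmp_right_irr_chain_multiples:
  assumes I: "is_ideal C I" and W: "W \<in> ob C" and N: "indec C N" and Y: "indec C Y"
    and irr: "right_irr C I N Y u"
    and q: "q \<in> msums C W N (right_multiples C (irr_chains_into C (right_irr C I) n N) W)"
  shows "cmp C u q \<in> msums C W Y (right_multiples C (irr_chains_into C (right_irr C I) (Suc n) Y) W)"
proof -
  let ?S = "irr_chains_into C (right_irr C I) (Suc n) Y"
  have N_ob: "N \<in> ob C" and Y_ob: "Y \<in> ob C"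
    using N Y by (simp_all add: indec_ob)
  have u: "u \<in> hom C N Y"
    by (rule right_irr_hom[OF I N_ob Y_ob irr])
  have S_hom: "right_multiples C ?S W \<subseteq> hom C W Y"
    by (rule right_multiples_subset_hom[OF right_irr_chains_into_subset[OF I] W Y_ob])
  show ?thesis
  proof (rule cmp_left_msums[OF W N_ob Y_ob u right_multiples_subset_hom[OF right_irr_chains_into_subset[OF I] W N_ob]
        S_hom _ q])
    fix p assume "p \<in> right_multiples C (irr_chains_into C (right_irr C I) n N) W"
    then obtain E g h where chain: "irr_chain C (right_irr C I) E N n g"
      and h: "h \<in> hom C W E" and p: "p = cmp C g h"
      unfolding right_multiples_def irr_chains_into_def by blast
    have E: "E \<in> ob C"
      using irr_chain_indec[OF chain] by (simp add: indec_ob)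
    have g: "g \<in> hom C E N"
      using I chain by (rule right_irr_chain_hom)
    have "cmp C u p = cmp C (cmp C u g) h"
      unfolding p using W E N_ob Y_ob h g u by (simp add: cmp_assoc)
    moreover have "irr_chain C (right_irr C I) E Y (Suc n) (cmp C u g)"
      using chain Y irr by (rule irr_chain.step)
    ultimately have "cmp C u p \<in> right_multiples C ?S W"
      unfolding right_multiples_def irr_chains_into_def using h by blast
    then show "cmp C u p \<in> msums C W Y (right_multiples C ?S W)"
      using subset_msums[OF W Y_ob S_hom] by blast
  qed
qed

lemma local_right_irr_subset_arrows_into:
  assumes I: "is_ideal C I" and Y: "Y \<in> ob C"
  shows "local_right_irr C I Y \<subseteq> arrows_into C Y"
  unfolding arrows_into_def local_right_irr_def
proof (intro subsetI, clarify)
  fix N v assume "local_end C N" and irr: "right_irr C I N Y v"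
  then have "N \<in> ob C"
    unfolding local_end_def by blast
  then show "N \<in> ob C \<and> v \<in> hom C N Y"
    using right_irr_hom[OF I _ Y irr] by blast
qed

lemma generates_right_single_chains:
  assumes I: "is_ideal C I" and ks: "krull_schmidt C" and Y: "indec C Y"
    and approx: "right_approx C I Y M v"
  shows "generates_right C I (irr_chains_into C (right_irr C I) (Suc 0) Y) Y"
proof (rule generates_right_mono)
  show "generates_right C I (local_right_irr C I Y) Y"
    by (rule right_irreducibles_generate[OF I ks indec_ob[OF Y] approx])
  show "local_right_irr C I Y \<subseteq> irr_chains_into C (right_irr C I) (Suc 0) Y"
    unfolding local_right_irr_def irr_chains_into_def
  proof (intro subsetI, clarify)
    fix N v assume "local_end C N" and "right_irr C I N Y v"
    then show "irr_chain C (right_irr C I) N Y (Suc 0) v"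
      using Y local_end_indec by (blast intro: irr_chain.one)
  qed
qed

lemma generates_right_ideal_prod_chains:
  assumes I: "is_ideal C I" and ks: "krull_schmidt C" and Y: "indec C Y"
    and approx: "right_approx C I Y M v"
    and J: "hom_subfamily C J"
    and J_cmp: "\<And>W V N b c. W \<in> ob C \<Longrightarrow> V \<in> ob C \<Longrightarrow> N \<in> ob C \<Longrightarrow> b \<in> J W V \<Longrightarrow> c \<in> hom C V N \<Longrightarrow>
      cmp C c b \<in> J W N"
    and J_gen: "\<And>N. indec C N \<Longrightarrow> generates_right C J (irr_chains_into C (right_irr C I) n N) N"
  shows "generates_right C (ideal_prod C I J) (irr_chains_into C (right_irr C I) (Suc n) Y) Y"
  unfolding generates_right_def
proof (intro ballI)
  fix W assume W: "W \<in> ob C"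
  let ?G = "local_right_irr C I Y"
  let ?S = "irr_chains_into C (right_irr C I) (Suc n) Y"
  have Y_ob: "Y \<in> ob C"
    using Y by (rule indec_ob)
  have G_hom: "?G \<subseteq> arrows_into C Y"
    by (rule local_right_irr_subset_arrows_into[OF I Y_ob])
  have S_hom: "right_multiples C ?S W \<subseteq> hom C W Y"
    by (rule right_multiples_subset_hom[OF right_irr_chains_into_subset[OF I] W Y_ob])
  have gen: "generates_right C I ?G Y"
    by (rule right_irreducibles_generate[OF I ks Y_ob approx])
  have "cmp C a b \<in> msums C W Y (right_multiples C ?S W)"
    if V: "V \<in> ob C" and a: "a \<in> I V Y" and b: "b \<in> J W V" for V a b
  proof -
    have b_hom: "b \<in> hom C W V"
      using b J W V unfolding hom_subfamily_def by blast
    have a_gen: "a \<in> msums C V Y (right_multiples C ?G V)"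
      using gen V a unfolding generates_right_def by blast
    show ?thesis
    proof (rule cmp_right_msums[OF W V Y_ob b_hom right_multiples_subset_hom[OF G_hom V Y_ob] S_hom _ a_gen])
      fix p assume "p \<in> right_multiples C ?G V"
      then obtain N u c where "local_end C N" and irr: "right_irr C I N Y u" and c: "c \<in> hom C V N"
        and p: "p = cmp C u c"
        unfolding right_multiples_def local_right_irr_def by blast
      then have N: "indec C N"
        by (simp add: local_end_indec)
      have N_ob: "N \<in> ob C"
        using N by (rule indec_ob)
      have "cmp C p b = cmp C u (cmp C c b)"
        unfolding p using W V N_ob Y_ob b_hom c right_irr_hom[OF I N_ob Y_ob irr] by (rule cmp_assoc)
      moreover have "cmp C c b \<in> msums C W N (right_multiples C (irr_chains_into C (right_irr C I) n N) W)"
        using J_gen[OF N] J_cmp[OF W V N_ob b c] W unfolding generates_right_def by blast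
      ultimately show "cmp C p b \<in> msums C W Y (right_multiples C ?S W)"
        using cmp_right_irr_chain_multiples[OF I W N Y irr] by simp
    qed
  qed
  then show "ideal_prod C I J W Y \<subseteq> msums C W Y (right_multiples C ?S W)"
    unfolding ideal_prod_msums composites_def
    by (intro msums_msums_subset[OF W Y_ob S_hom]) blast
qed

lemma ideal_pow_generated_by_right_irr_chains:
  assumes I: "is_ideal C I" and ks: "krull_schmidt C"
    and approx: "\<forall>T\<in>ob C. \<exists>M v. right_approx C I T M v"
  shows "indec C Y \<Longrightarrow>
    generates_right C (ideal_pow C I (Suc m)) (irr_chains_into C (right_irr C I) (Suc m) Y) Y"
proof (induction m arbitrary: Y)
  case 0
  have "Y \<in> ob C"
    using 0 by (rule indec_ob)
  then obtain M v where approx_Y: "right_approx C I Y M v"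
    using approx by blast
  show ?case
    using generates_right_single_chains[OF I ks 0 approx_Y] by simp
next
  case (Suc m)
  have "Y \<in> ob C"
    using Suc.prems by (rule indec_ob)
  then obtain M v where approx_Y: "right_approx C I Y M v"
    using approx by blast
  show ?case
    using generates_right_ideal_prod_chains[OF I ks Suc.prems approx_Y ideal_pow_hom_subfamily[OF I]
        ideal_pow_cmp_left[OF I] Suc.IH]
    by simp
qed

lemma sum_of_chains_single:
  assumes "irr_chain C P X Y n g" and "X \<in> ob C" and "Y \<in> ob C" and "g \<in> hom C X Y"
  shows "sum_of_chains C P n X Y g"
  unfolding sum_of_chains_def using assms by (intro exI[of _ "[g]"]) (simp add: madd_zero_right)

lemma right_irr_chains_hom_subfamily:
  "is_ideal C I \<Longrightarrow> hom_subfamily C (\<lambda>E Y. {g. irr_chain C (right_irr C I) E Y n g})"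
  unfolding hom_subfamily_def using right_irr_chain_hom by blast

lemma ideal_pow_prod_subset_right_irr_chains_prod:
  assumes I: "is_ideal C I" and ks: "krull_schmidt C"
    and approx: "\<forall>T\<in>ob C. \<exists>M v. right_approx C I T M v"
    and R: "is_ideal C R" and X: "X \<in> ob C" and Y: "indec C Y"
  shows "ideal_prod C (ideal_pow C I (Suc m)) R X Y \<subseteq>
    ideal_prod C (\<lambda>E Y. {g. irr_chain C (right_irr C I) E Y (Suc m) g}) R X Y"
proof -
  let ?A = "\<lambda>E Y. {g. irr_chain C (right_irr C I) E Y (Suc m) g}"
  have Y_ob: "Y \<in> ob C"
    using Y by (rule indec_ob)
  have A_R_hom: "composites C ?A R X Y \<subseteq> hom C X Y"
    by (rule composites_subset_hom[OF right_irr_chains_hom_subfamily[OF I]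
          is_ideal_hom_subfamily[OF R] X Y_ob])
  have "cmp C a b \<in> msums C X Y (composites C ?A R X Y)"
    if W: "W \<in> ob C" and a: "a \<in> ideal_pow C I (Suc m) W Y" and b: "b \<in> R X W" for W a b
  proof -
    have b_hom: "b \<in> hom C X W"
      using b ideal_subset_hom[OF R X W] by blast
    have "a \<in> msums C W Y (right_multiples C (irr_chains_into C (right_irr C I) (Suc m) Y) W)"
      using ideal_pow_generated_by_right_irr_chains[OF I ks approx Y] W a
      unfolding generates_right_def by blast
    then show ?thesis
    proof (rule cmp_right_msums[OF X W Y_ob b_hom
          right_multiples_subset_hom[OF right_irr_chains_into_subset[OF I] W Y_ob] A_R_hom, rotated])
      fix p assume "p \<in> right_multiples C (irr_chains_into C (right_irr C I) (Suc m) Y) W"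
      then obtain E g h where chain: "irr_chain C (right_irr C I) E Y (Suc m) g" and h: "h \<in> hom C W E"
        and p: "p = cmp C g h"
        unfolding right_multiples_def irr_chains_into_def by blast
      have E: "E \<in> ob C"
        using irr_chain_indec[OF chain] by (simp add: indec_ob)
      have "cmp C p b = cmp C g (cmp C h b)"
        unfolding p using X W E Y_ob b_hom h right_irr_chain_hom[OF I chain] by (simp add: cmp_assoc)
      moreover have "cmp C h b \<in> R X E"
        by (rule ideal_cmp_left[OF R X W E b h])
      ultimately have "cmp C p b \<in> composites C ?A R X Y"
        unfolding composites_def using E chain by blast
      then show "cmp C p b \<in> msums C X Y (composites C ?A R X Y)"
        using subset_msums[OF X Y_ob A_R_hom] by blast
    qed
  qed
  then show ?thesis
    unfolding ideal_prod_msums[of C _ R]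
    by (intro msums_msums_subset[OF X Y_ob A_R_hom]) (auto simp: composites_def)
qed

lemma right_chain_factorization:
  assumes I: "is_ideal C I" and ks: "krull_schmidt C"
    and approx: "\<forall>T\<in>ob C. \<exists>M v. right_approx C I T M v"
    and R: "is_ideal C R" and X: "indec C X" and Y: "indec C Y"
    and n: "n \<ge> 1" and f: "f \<in> ideal_prod C (ideal_pow C I n) R X Y"
  shows "\<exists>es :: ('o \<times> 'm \<times> 'm) list. es \<noteq> [] \<and>
    (\<forall>(E, g, h)\<in>set es. indec C E \<and> h \<in> R X E \<and> sum_of_chains C (right_irr C I) n E Y g) \<and>
    f = msum C X Y (map (\<lambda>(E, g, h). cmp C g h) es)"
proof -
  obtain m where n_eq: "n = Suc m"
    using n by (cases n) auto
  have X_ob: "X \<in> ob C" and Y_ob: "Y \<in> ob C"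
    using X Y by (simp_all add: indec_ob)
  have "f \<in> ideal_prod C (\<lambda>E Y. {g. irr_chain C (right_irr C I) E Y n g}) R X Y"
    using ideal_pow_prod_subset_right_irr_chains_prod[OF I ks approx R X_ob Y] f n_eq by blast
  then obtain es :: "('o \<times> 'm \<times> 'm) list"
    where es: "\<forall>(E, g, h)\<in>set es. E \<in> ob C \<and> g \<in> {g. irr_chain C (right_irr C I) E Y n g} \<and> h \<in> R X E"
      and f_eq: "f = msum C X Y (map (\<lambda>(E, g, h). cmp C g h) es)"
    unfolding ideal_prod_def by blast
  show ?thesis
  proof (cases "es = []")
    case True
    \<comment> \<open>then f = 0, written as the single composite 0 0 because the list must be non-empty\<close>
    have "mzero C X X \<in> R X X"
      using R X_ob unfolding is_ideal_def by blast
    moreover have "f = msum C X Y (map (\<lambda>(E, g, h). cmp C g h) [(X, mzero C X Y, mzero C X X)])"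
      using f_eq True X_ob Y_ob by (simp add: cmp_zero_left hom_mzero madd_zero_left)
    ultimately show ?thesis
      using X sum_of_chains_zero by (intro exI[of _ "[(X, mzero C X Y, mzero C X X)]"]) auto
  next
    case False
    have "indec C E \<and> h \<in> R X E \<and> sum_of_chains C (right_irr C I) n E Y g" if "(E, g, h) \<in> set es" for E g h
    proof -
      have chain: "irr_chain C (right_irr C I) E Y n g" and "h \<in> R X E"
        using that es by blast+
      moreover have "indec C E"
        using irr_chain_indec[OF chain] by simp
      ultimately show ?thesis
        using sum_of_chains_single[OF chain indec_ob Y_ob right_irr_chain_hom[OF I chain]] by blast
    qed
    with False f_eq show ?thesis
      by blast
  qed
qed

end

section \<open>The opposite category\<close>

definition opposite_cat :: "('o, 'm, 'k) tcat \<Rightarrow> ('o, 'm, 'k) tcat" where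
  "opposite_cat C = C\<lparr>hom := (\<lambda>X Y. hom C Y X), cmp := (\<lambda>g f. cmp C f g), mzero := (\<lambda>X Y. mzero C Y X)\<rparr>"

lemma opposite_cat_simps [simp]:
  "ob (opposite_cat C) = ob C" "hom (opposite_cat C) X Y = hom C Y X" "cmp (opposite_cat C) g f = cmp C f g"
  "idm (opposite_cat C) = idm C" "madd (opposite_cat C) = madd C" "mzero (opposite_cat C) X Y = mzero C Y X"
  "mneg (opposite_cat C) = mneg C" "msmult (opposite_cat C) = msmult C"
  by (simp_all add: opposite_cat_def)

lemma msum_opposite_cat [simp]: "msum (opposite_cat C) X Y fs = msum C Y X fs"
  by (simp add: msum_def)

lemma msums_opposite_cat [simp]: "msums (opposite_cat C) X Y P = msums C Y X P"
  by (simp add: msums_def)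

lemma local_end_opposite_cat [simp]: "local_end (opposite_cat C) X \<longleftrightarrow> local_end C X"
  unfolding local_end_def is_iso_def by auto

lemma indec_opposite_cat [simp]: "indec (opposite_cat C) X \<longleftrightarrow> indec C X"
proof -
  have "is_biprod (opposite_cat C) A B X i1 i2 p1 p2 \<longleftrightarrow> is_biprod C A B X p1 p2 i1 i2" for A B i1 i2 p1 p2
    unfolding is_biprod_def by auto
  then show ?thesis
    unfolding indec_def is_zero_obj_def by (simp only: opposite_cat_simps) blast
qed

lemma krull_schmidt_opposite_cat:
  assumes "krull_schmidt C"
  shows "krull_schmidt (opposite_cat C)"
  unfolding krull_schmidt_def
proof
  fix X assume "X \<in> ob (opposite_cat C)"
  then obtain n Xs \<iota> \<pi> where "\<forall>i<(n::nat). local_end C (Xs i) \<and> \<iota> i \<in> hom C (Xs i) X \<and> \<pi> i \<in> hom C X (Xs i)"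
    and "\<forall>i<n. \<forall>j<n. cmp C (\<pi> i) (\<iota> j) = (if i = j then idm C (Xs i) else mzero C (Xs j) (Xs i))"
    and "msum C X X (map (\<lambda>i. cmp C (\<iota> i) (\<pi> i)) [0..<n]) = idm C X"
    using assms unfolding krull_schmidt_def by auto
  then show "\<exists>n Xs \<iota> \<pi>.
      (\<forall>i<n. local_end (opposite_cat C) (Xs i) \<and> \<iota> i \<in> hom (opposite_cat C) (Xs i) X \<and>
        \<pi> i \<in> hom (opposite_cat C) X (Xs i)) \<and>
      (\<forall>i<n. \<forall>j<n. cmp (opposite_cat C) (\<pi> i) (\<iota> j) =
        (if i = j then idm (opposite_cat C) (Xs i) else mzero (opposite_cat C) (Xs j) (Xs i))) \<and>
      msum (opposite_cat C) X X (map (\<lambda>i. cmp (opposite_cat C) (\<iota> i) (\<pi> i)) [0..<n]) = idm (opposite_cat C) X"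
    by (intro exI[of _ n] exI[of _ Xs] exI[of _ \<pi>] exI[of _ \<iota>]) simp
qed

lemma right_approx_opposite_cat:
  "right_approx (opposite_cat C) (\<lambda>X Y. I Y X) T M f \<longleftrightarrow> left_approx C I T M f"
  unfolding right_approx_def left_approx_def by simp

lemma right_irr_opposite_cat:
  "right_irr (opposite_cat C) (\<lambda>X Y. I Y X) A B h \<longleftrightarrow> left_irr C I B A h"
  unfolding right_irr_def left_irr_def by auto

lemma ideal_prod_opposite_cat:
  "ideal_prod (opposite_cat C) A B X Y = ideal_prod C (\<lambda>U V. B V U) (\<lambda>U V. A V U) Y X"
proof -
  have "composites (opposite_cat C) A B X Y = composites C (\<lambda>U V. B V U) (\<lambda>U V. A V U) Y X"
    unfolding composites_def by auto
  then show ?thesis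
    by (simp add: ideal_prod_msums)
qed

context k_linear
begin

lemma k_linear_cat_opposite_cat: "k_linear_cat (opposite_cat C)"
  using k_linear unfolding k_linear_cat_def opposite_cat_simps
  apply (elim conjE)
  apply (intro conjI)
  subgoal premises ax using ax(1) by blast
  subgoal premises ax using ax(2) by blast
  subgoal premises ax using ax(3) by blast
  subgoal premises ax using ax(4) by auto
  subgoal premises ax using ax(5) by blast
  subgoal premises ax by (intro ballI) (rule ax(6)[rule_format]; assumption)
  subgoal premises ax using ax(7) by blast
  done

lemma is_ideal_opposite_cat:
  assumes I: "is_ideal C I"
  shows "is_ideal (opposite_cat C) (\<lambda>X Y. I Y X)"
proof -
  have "cmp C (cmp C a f) b \<in> I Z W"
    if "W \<in> ob C" "X \<in> ob C" "Y \<in> ob C" "Z \<in> ob C" "f \<in> I Y X" "a \<in> hom C X W" "b \<in> hom C Z Y"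
    for W X Y Z f a b
    using that by (intro ideal_cmp_right[OF I] ideal_cmp_left[OF I])
  with I show ?thesis
    unfolding is_ideal_def opposite_cat_simps by blast
qed

lemma ideal_pow_opposite_cat:
  assumes I: "is_ideal C I"
  shows "X \<in> ob C \<Longrightarrow> Y \<in> ob C \<Longrightarrow>
    ideal_pow (opposite_cat C) (\<lambda>X Y. I Y X) (Suc n) X Y = ideal_pow C I (Suc n) Y X"
proof (induction n arbitrary: X Y)
  case 0
  then show ?case by simp
next
  case (Suc n)
  have "ideal_pow (opposite_cat C) (\<lambda>X Y. I Y X) (Suc (Suc n)) X Y =
      ideal_prod C (\<lambda>U V. ideal_pow (opposite_cat C) (\<lambda>X Y. I Y X) (Suc n) V U) I Y X"
    by (simp add: ideal_prod_opposite_cat)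
  also have "\<dots> = ideal_prod C (ideal_pow C I (Suc n)) I Y X"
    using Suc by (intro ideal_prod_cong) simp_all
  also have "\<dots> = ideal_pow C I (Suc (Suc n)) Y X"
    using ideal_pow_Suc_right[OF I Suc.prems(2,1)] by simp
  finally show ?case .
qed

lemma irr_chain_prepend:
  assumes P_hom: "\<And>A B h. indec C A \<Longrightarrow> indec C B \<Longrightarrow> P A B h \<Longrightarrow> h \<in> hom C A B"
  shows "irr_chain C P Y X n f \<Longrightarrow> indec C Z \<Longrightarrow> P Z Y g \<Longrightarrow> irr_chain C P Z X (Suc n) (cmp C f g)"
proof (induction rule: irr_chain.induct)
  case (one Y X f)
  then show ?case
    by (blast intro: irr_chain.one irr_chain.step)
next
  case (step Y X n f X' f')
  have "irr_chain C P Z X' (Suc (Suc n)) (cmp C f' (cmp C f g))"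
    using step by (blast intro: irr_chain.step)
  moreover have "cmp C f' (cmp C f g) = cmp C (cmp C f' f) g"
  proof -
    have Y: "indec C Y" and X: "indec C X"
      using irr_chain_indec[OF step.hyps(1)] by simp_all
    show ?thesis
      using cmp_assoc[OF indec_ob[OF step.prems(1)] indec_ob[OF Y] indec_ob[OF X] indec_ob[OF step.hyps(2)]
          P_hom[OF step.prems(1) Y step.prems(2)] irr_chain_hom[OF P_hom step.hyps(1)] P_hom[OF X step.hyps(2,3)]]
      by (rule sym)
  qed
  ultimately show ?case
    by simp
qed

lemma irr_chain_opposite_cat:
  assumes P_hom: "\<And>A B h. indec C A \<Longrightarrow> indec C B \<Longrightarrow> P A B h \<Longrightarrow> h \<in> hom C A B"
  shows "irr_chain (opposite_cat C) (\<lambda>A B h. P B A h) X Y n f \<Longrightarrow> irr_chain C P Y X n f"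
proof (induction rule: irr_chain.induct)
  case (one X Y f)
  then show ?case
    by (simp add: irr_chain.one)
next
  case (step X Y n f Z g)
  then show ?case
    by (simp add: irr_chain_prepend[OF P_hom])
qed

lemma left_irr_hom:
  assumes "is_ideal C I" and "A \<in> ob C" and "B \<in> ob C" and "left_irr C I A B h"
  shows "h \<in> hom C A B"
proof -
  have "h \<in> I A B"
    using assms(4) unfolding left_irr_def by (rule conjunct1)
  then show ?thesis
    using ideal_subset_hom[OF assms(1-3)] by blast
qed

lemma sum_of_chains_opposite_cat:
  assumes I: "is_ideal C I"
    and g: "sum_of_chains (opposite_cat C) (right_irr (opposite_cat C) (\<lambda>X Y. I Y X)) n E X g"
  shows "sum_of_chains C (left_irr C I) n X E g"
proof -
  have P_hom: "\<And>A B h. indec C A \<Longrightarrow> indec C B \<Longrightarrow> left_irr C I A B h \<Longrightarrow> h \<in> hom C A B"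
    by (rule left_irr_hom[OF I indec_ob indec_ob])
  have op_irr: "right_irr (opposite_cat C) (\<lambda>X Y. I Y X) = (\<lambda>A B h. left_irr C I B A h)"
    by (simp add: right_irr_opposite_cat fun_eq_iff)
  obtain fs where fs: "\<forall>f\<in>set fs. irr_chain (opposite_cat C) (\<lambda>A B h. left_irr C I B A h) E X n f"
    and g_eq: "g = msum C X E fs"
    using g unfolding sum_of_chains_def op_irr by auto
  have "\<forall>f\<in>set fs. irr_chain C (left_irr C I) X E n f"
    using fs irr_chain_opposite_cat[OF P_hom] by blast
  with g_eq show ?thesis
    unfolding sum_of_chains_def by blast
qed

lemma left_chain_factorization:
  assumes I: "is_ideal C I" and ks: "krull_schmidt C"
    and approx: "\<forall>T\<in>ob C. \<exists>M u. left_approx C I T M u"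
    and R: "is_ideal C R" and X: "indec C X" and Y: "indec C Y"
    and n: "n \<ge> 1" and f: "f \<in> ideal_prod C R (ideal_pow C I n) X Y"
  shows "\<exists>es :: ('o \<times> 'm \<times> 'm) list. es \<noteq> [] \<and>
    (\<forall>(E, g, h)\<in>set es. indec C E \<and> g \<in> R E Y \<and> sum_of_chains C (left_irr C I) n X E h) \<and>
    f = msum C X Y (map (\<lambda>(E, g, h). cmp C g h) es)"
proof -
  interpret op: k_linear "opposite_cat C"
    by (rule k_linear.intro[OF k_linear_cat_opposite_cat])
  obtain m where n_eq: "n = Suc m"
    using n by (cases n) auto
  have "f \<in> ideal_prod C R (\<lambda>U V. ideal_pow (opposite_cat C) (\<lambda>X Y. I Y X) n V U) X Y"
    using f n_eq ideal_pow_opposite_cat[OF I _ indec_ob[OF X]] by (subst ideal_prod_cong) simp_all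
  then have "f \<in> ideal_prod (opposite_cat C) (ideal_pow (opposite_cat C) (\<lambda>X Y. I Y X) n) (\<lambda>X Y. R Y X) Y X"
    by (simp add: ideal_prod_opposite_cat)
  moreover have "\<forall>T\<in>ob (opposite_cat C). \<exists>M v. right_approx (opposite_cat C) (\<lambda>X Y. I Y X) T M v"
    using approx by (simp add: right_approx_opposite_cat)
  ultimately have "\<exists>es :: ('o \<times> 'm \<times> 'm) list. es \<noteq> [] \<and>
      (\<forall>(E, g, h)\<in>set es. indec (opposite_cat C) E \<and> h \<in> R E Y \<and>
        sum_of_chains (opposite_cat C) (right_irr (opposite_cat C) (\<lambda>X Y. I Y X)) n E X g) \<and>
      f = msum (opposite_cat C) Y X (map (\<lambda>(E, g, h). cmp (opposite_cat C) g h) es)"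
    using op.right_chain_factorization[OF is_ideal_opposite_cat[OF I] krull_schmidt_opposite_cat[OF ks] _
        is_ideal_opposite_cat[OF R] _ _ n] X Y by simp
  then obtain es :: "('o \<times> 'm \<times> 'm) list" where "es \<noteq> []"
    and es: "\<forall>(E, g, h)\<in>set es. indec C E \<and> h \<in> R E Y \<and>
      sum_of_chains (opposite_cat C) (right_irr (opposite_cat C) (\<lambda>X Y. I Y X)) n E X g"
    and f_eq: "f = msum C X Y (map (\<lambda>(E, g, h). cmp C h g) es)"
    by auto
  let ?es = "map (\<lambda>(E, g, h). (E, h, g)) es"
  have "\<forall>(E, g, h)\<in>set ?es. indec C E \<and> g \<in> R E Y \<and> sum_of_chains C (left_irr C I) n X E h"
    using es sum_of_chains_opposite_cat[OF I] by auto
  moreover have "f = msum C X Y (map (\<lambda>(E, g, h). cmp C g h) ?es)"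
    using f_eq by (simp add: split_def comp_def)
  ultimately show ?thesis
    using \<open>es \<noteq> []\<close> by blast
qed

end

theorem proposition4p11:
  fixes C :: "('o, 'm, 'k::field) tcat"
    and I R :: "'o \<Rightarrow> 'o \<Rightarrow> 'm set"
    and X Y :: 'o
  assumes "\<forall>p :: 'k poly. 0 < degree p \<longrightarrow> (\<exists>x. poly p x = 0)"
    and "triangulated_cat C"
    and "hom_finite C"
    and "krull_schmidt C"
    and "ar_ideal C I"
    and "is_ideal C R"
    and "indec C X"
    and "indec C Y"
  shows "(\<forall>n\<ge>1. \<forall>f\<in>ideal_prod C (ideal_pow C I n) R X Y.
            \<exists>es :: ('o \<times> 'm \<times> 'm) list. es \<noteq> [] \<and>
              (\<forall>(E, g, h)\<in>set es. indec C E \<and> h \<in> R X E \<and> sum_of_chains C (right_irr C I) n E Y g) \<and>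
              f = msum C X Y (map (\<lambda>(E, g, h). cmp C g h) es))
       \<and> (\<forall>n\<ge>1. \<forall>f\<in>ideal_prod C R (ideal_pow C I n) X Y.
            \<exists>es :: ('o \<times> 'm \<times> 'm) list. es \<noteq> [] \<and>
              (\<forall>(E, g, h)\<in>set es. indec C E \<and> g \<in> R E Y \<and> sum_of_chains C (left_irr C I) n X E h) \<and>
              f = msum C X Y (map (\<lambda>(E, g, h). cmp C g h) es))"
proof -
  have "k_linear_cat C"
    using assms(2) unfolding triangulated_cat_def additive_k_cat_def by (elim conjE)
  then interpret k_linear C
    by (rule k_linear.intro)
  have I: "is_ideal C I"
    using assms(5) unfolding ar_ideal_def by (elim conjE)
  have approx: "\<forall>T\<in>ob C. (\<exists>M f. left_approx C I T M f) \<and> (\<exists>M f. right_approx C I T M f)"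
    using assms(5) unfolding ar_ideal_def by (elim conjE)
  show ?thesis
    using right_chain_factorization[OF I assms(4) _ assms(6-8)]
      left_chain_factorization[OF I assms(4) _ assms(6-8)] approx
    by blast
qed

end
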